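(* Let $\Lambda'$ be the set obtained from \[ \Lambda=\Big\{(s,t,\sigma,\tau;u,v,\xi,\eta):\ t=\tfrac{2}{c_0}|R(u,v,s)|,\ \sigma=\tfrac{2\tau}{c_0}\hat R(u,v,s)\cdot\dot\gamma(s),\ (\xi,\eta)=-\tfrac{2\tau}{c_0}\pi_{T\Psi}\hat R(u,v,s)\Big\} \] by replacing $(\xi,\eta)$ with $(-\xi,-\eta)$ (the canonical relation of $F$). Then $\Lambda'$ is a homogeneous canonical relation which is locally of graph type away from the degenerate set $\Sigma=\Sigma_1\cup\Sigma_2$, where \[ \Sigma_1=\{(s,t,\sigma,\tau,u,v,\xi,\eta):\ \pi_{T\Psi}\hat R(u,v,s)\parallel \nabla_{u,v}(\hat R(u,v,s)\cdot\dot\gamma(s))\}\cap\Lambda', \] \[ \Sigma_2=\{(s,t,\sigma,\tau,u,v,\xi,\eta):\ \pi_{T\Psi}\hat R(u,v,s)\parallel \partial_s\pi_{T\Psi}\hat R(u,v,s)\}\cap\Lambda'. \]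
   Context: Setting (synthetic aperture radar model). $\gamma$ is a smooth embedded curve in $\mathbb{R}^3$ (the flight path) parametrized by unit speed $s$, and $\Psi\subset\mathbb{R}^3$ is a smooth embedded surface, locally parametrized as $\psi(u,v)$, with $\mathrm{dist}(\Psi,\gamma)>0$. $c_0>0$ is a constant. $\mathcal{Y}=(s_1,s_2)\times(t_1,t_2)$ and $\mathcal{X}=\{(u,v):\exists s\in(s_1,s_2),\ \tfrac{2}{c_0}|\psi(u,v)-\gamma(s)|\in(t_1,t_2)\}$. Write $R(u,v,s)=\psi(u,v)-\gamma(s)$, $\hat R=R/|R|$; $\pi_{T\Psi}\hat R(u,v,s)$ is the projection of $\hat R(u,v,s)$ onto the tangent plane of $\Psi$ at $\psi(u,v)$, expressed as a pair of components $(\pi_1,\pi_2)$ in the coordinates $(u,v)$; "$\parallel$" means the two planar vectors are parallel (linearly dependent). The forward operator is $FV(s,t)=\int A(u,v,s,t,\omega)e^{-i\omega(t-\frac{2}{c_0}|\psi(u,v)-\gamma(s)|)}V(u,v)\,du\,dv\,d\omega$ with $A$ a properly supported amplitude of order two. Coordinates $(s,t,\sigma,\tau)$ on $T^*\mathcal{Y}$, $(u,v,\xi,\eta)$ on $T^*\mathcal{X}$. A canonical relation $C\subset (T^*\mathcal{Y}\setminus0)\times(T^*\mathcal{X}\setminus0)$ is locally of graph type near a point if the projections of $C$ to $T^*\mathcal{Y}$ and to $T^*\mathcal{X}$ have differentials of full rank there (so that $C$ is locally the graph of a diffeomorphism). *)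

theory Defs
  imports "HOL-Analysis.Analysis" "HOL-Analysis.Cross3"
begin

type_synonym R4 = "real \<times> real \<times> real \<times> real"
type_synonym pt = "R4 \<times> R4"
  \<comment> \<open>a point ((s,t,sigma,tau),(u,v,xi,eta)) of T*Y x T*X\<close>

fun iter_dderiv :: "'a::real_normed_vector list \<Rightarrow> ('a \<Rightarrow> real) \<Rightarrow> 'a \<Rightarrow> real" where
  "iter_dderiv [] f = f"
| "iter_dderiv (b # bs) f = (\<lambda>x. deriv (\<lambda>h. iter_dderiv bs f (x + h *\<^sub>R b)) 0)"

definition smooth_on_set :: "'a::euclidean_space set \<Rightarrow> ('a \<Rightarrow> 'b::euclidean_space) \<Rightarrow> bool" where
  "smooth_on_set S f \<longleftrightarrow>
     (\<forall>c\<in>Basis. \<forall>bs. set bs \<subseteq> Basis \<longrightarrow>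
        continuous_on S (iter_dderiv bs (\<lambda>x. f x \<bullet> c)) \<and>
        (\<forall>b\<in>Basis. \<forall>x\<in>S. (\<lambda>h. iter_dderiv bs (\<lambda>x. f x \<bullet> c) (x + h *\<^sub>R b)) differentiable (at 0)))"

definition submanifold4 :: "'e::euclidean_space set \<Rightarrow> bool" where
  "submanifold4 M \<longleftrightarrow>
     (\<forall>p\<in>M. \<exists>(U::R4 set) W (\<phi>::R4 \<Rightarrow> 'e). open U \<and> open W \<and> p \<in> W \<and>
        smooth_on_set U \<phi> \<and> inj_on \<phi> U \<and> \<phi> ` U = M \<inter> W \<and>
        continuous_on (M \<inter> W) (inv_into U \<phi>) \<and>
        (\<forall>x\<in>U. \<exists>L. (\<phi> has_derivative L) (at x) \<and> inj L))"

definition tangent_vectors :: "'e::real_normed_vector set \<Rightarrow> 'e \<Rightarrow> 'e set" where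
  "tangent_vectors M p =
     {w. \<exists>c. (\<forall>r. c r \<in> M) \<and> c 0 = p \<and> (c has_vector_derivative w) (at 0)}"

text \<open>canonical symplectic form d sigma /\ ds + d tau /\ dt on T*R^2,
  coordinates (s,t,sigma,tau)\<close>
fun sympl :: "R4 \<Rightarrow> R4 \<Rightarrow> real" where
  "sympl (a1, b1, c1, d1) (a2, b2, c2, d2) = c1 * a2 - c2 * a1 + d1 * b2 - d2 * b1"

fun twisted_form :: "pt \<Rightarrow> pt \<Rightarrow> real" where
  "twisted_form (y1, x1) (y2, x2) = sympl y1 y2 - sympl x1 x2"

definition cotangent_nonzero :: "(real \<times> real) set \<Rightarrow> (real \<times> real) set \<Rightarrow> pt set" where
  "cotangent_nonzero Y X =
     {((s, t, \<sigma>, \<tau>), (u, v, \<xi>, \<eta>)). (s, t) \<in> Y \<and> (u, v) \<in> X \<and> (\<sigma>, \<tau>, \<xi>, \<eta>) \<noteq> 0}"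

fun fiber_scale :: "real \<Rightarrow> pt \<Rightarrow> pt" where
  "fiber_scale l ((s, t, \<sigma>, \<tau>), (u, v, \<xi>, \<eta>)) = ((s, t, l * \<sigma>, l * \<tau>), (u, v, l * \<xi>, l * \<eta>))"

definition conic :: "pt set \<Rightarrow> bool" where
  "conic C \<longleftrightarrow> (\<forall>p\<in>C. \<forall>l>0. fiber_scale l p \<in> C)"

definition homogeneous_canonical_relation :: "(real \<times> real) set \<Rightarrow> (real \<times> real) set \<Rightarrow> pt set \<Rightarrow> bool" where
  "homogeneous_canonical_relation Y X C \<longleftrightarrow>
     C \<subseteq> cotangent_nonzero Y X \<and>
     closedin (top_of_set (cotangent_nonzero Y X)) C \<and>
     conic C \<and> submanifold4 C \<and>
     (\<forall>p\<in>C. \<forall>w1\<in>tangent_vectors C p. \<forall>w2\<in>tangent_vectors C p. twisted_form w1 w2 = 0)"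

definition locally_graph_type :: "pt set \<Rightarrow> pt \<Rightarrow> bool" where
  "locally_graph_type C p \<longleftrightarrow>
     dim (fst ` tangent_vectors C p) = DIM(R4) \<and> dim (snd ` tangent_vectors C p) = DIM(R4)"

definition parallel2 :: "real \<times> real \<Rightarrow> real \<times> real \<Rightarrow> bool" where
  "parallel2 a b \<longleftrightarrow> (\<exists>x y. (x, y) \<noteq> (0, 0) \<and> x *\<^sub>R a + y *\<^sub>R b = 0)"

definition Rv :: "(real \<times> real \<Rightarrow> real^3) \<Rightarrow> (real \<Rightarrow> real^3) \<Rightarrow> real \<Rightarrow> real \<Rightarrow> real \<Rightarrow> real^3" where
  "Rv \<psi> \<gamma> u v s = \<psi> (u, v) - \<gamma> s"

definition Rhat :: "(real \<times> real \<Rightarrow> real^3) \<Rightarrow> (real \<Rightarrow> real^3) \<Rightarrow> real \<Rightarrow> real \<Rightarrow> real \<Rightarrow> real^3" where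
  "Rhat \<psi> \<gamma> u v s = (1 / norm (Rv \<psi> \<gamma> u v s)) *\<^sub>R Rv \<psi> \<gamma> u v s"

definition psi_u :: "(real \<times> real \<Rightarrow> real^3) \<Rightarrow> real \<Rightarrow> real \<Rightarrow> real^3" where
  "psi_u \<psi> u v = vector_derivative (\<lambda>h. \<psi> (u + h, v)) (at 0)"

definition psi_v :: "(real \<times> real \<Rightarrow> real^3) \<Rightarrow> real \<Rightarrow> real \<Rightarrow> real^3" where
  "psi_v \<psi> u v = vector_derivative (\<lambda>h. \<psi> (u, v + h)) (at 0)"

definition gdot :: "(real \<Rightarrow> real^3) \<Rightarrow> real \<Rightarrow> real^3" where
  "gdot \<gamma> s = vector_derivative \<gamma> (at s)"

definition unit_normal :: "(real \<times> real \<Rightarrow> real^3) \<Rightarrow> real \<Rightarrow> real \<Rightarrow> real^3" where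
  "unit_normal \<psi> u v = (1 / norm (cross3 (psi_u \<psi> u v) (psi_v \<psi> u v))) *\<^sub>R cross3 (psi_u \<psi> u v) (psi_v \<psi> u v)"

text \<open>pi_{T Psi} Rhat, expressed in the coordinates (u,v): the tangential projection
  P = Rhat - (Rhat . n) n paired with the coordinate tangent vectors psi_u, psi_v
  (the components of the covector it defines in the basis du, dv).\<close>
definition piT :: "(real \<times> real \<Rightarrow> real^3) \<Rightarrow> (real \<Rightarrow> real^3) \<Rightarrow> real \<Rightarrow> real \<Rightarrow> real \<Rightarrow> real \<times> real" where
  "piT \<psi> \<gamma> u v s =
     (let P = Rhat \<psi> \<gamma> u v s - (Rhat \<psi> \<gamma> u v s \<bullet> unit_normal \<psi> u v) *\<^sub>R unit_normal \<psi> u v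
      in (P \<bullet> psi_u \<psi> u v, P \<bullet> psi_v \<psi> u v))"

definition Yset :: "real \<Rightarrow> real \<Rightarrow> real \<Rightarrow> real \<Rightarrow> (real \<times> real) set" where
  "Yset s1 s2 t1 t2 = {s1<..<s2} \<times> {t1<..<t2}"

definition Xset :: "(real \<times> real \<Rightarrow> real^3) \<Rightarrow> (real \<Rightarrow> real^3) \<Rightarrow> real \<Rightarrow> real \<Rightarrow> real \<Rightarrow> real \<Rightarrow> real \<Rightarrow> (real \<times> real) set \<Rightarrow> (real \<times> real) set" where
  "Xset \<psi> \<gamma> c0 s1 s2 t1 t2 D =
     {(u, v). (u, v) \<in> D \<and> (\<exists>s\<in>{s1<..<s2}. 2 / c0 * norm (\<psi> (u, v) - \<gamma> s) \<in> {t1<..<t2})}"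

definition Lambda :: "(real \<times> real \<Rightarrow> real^3) \<Rightarrow> (real \<Rightarrow> real^3) \<Rightarrow> real \<Rightarrow> real \<Rightarrow> real \<Rightarrow> real \<Rightarrow> real \<Rightarrow> (real \<times> real) set \<Rightarrow> pt set" where
  "Lambda \<psi> \<gamma> c0 s1 s2 t1 t2 D =
     {((s, t, \<sigma>, \<tau>), (u, v, \<xi>, \<eta>)).
        (s, t) \<in> Yset s1 s2 t1 t2 \<and> (u, v) \<in> Xset \<psi> \<gamma> c0 s1 s2 t1 t2 D \<and>
        t = 2 / c0 * norm (Rv \<psi> \<gamma> u v s) \<and>
        \<sigma> = 2 * \<tau> / c0 * (Rhat \<psi> \<gamma> u v s \<bullet> gdot \<gamma> s) \<and>
        (\<xi>, \<eta>) = - (2 * \<tau> / c0) *\<^sub>R piT \<psi> \<gamma> u v s}"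

definition Lambda' :: "(real \<times> real \<Rightarrow> real^3) \<Rightarrow> (real \<Rightarrow> real^3) \<Rightarrow> real \<Rightarrow> real \<Rightarrow> real \<Rightarrow> real \<Rightarrow> real \<Rightarrow> (real \<times> real) set \<Rightarrow> pt set" where
  "Lambda' \<psi> \<gamma> c0 s1 s2 t1 t2 D =
     {((s, t, \<sigma>, \<tau>), (u, v, \<xi>, \<eta>)). ((s, t, \<sigma>, \<tau>), (u, v, - \<xi>, - \<eta>)) \<in> Lambda \<psi> \<gamma> c0 s1 s2 t1 t2 D}"

definition grad_uv :: "(real \<Rightarrow> real \<Rightarrow> real) \<Rightarrow> real \<Rightarrow> real \<Rightarrow> real \<times> real" where
  "grad_uv g u v = (deriv (\<lambda>h. g (u + h) v) 0, deriv (\<lambda>h. g u (v + h)) 0)"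

definition ds_piT :: "(real \<times> real \<Rightarrow> real^3) \<Rightarrow> (real \<Rightarrow> real^3) \<Rightarrow> real \<Rightarrow> real \<Rightarrow> real \<Rightarrow> real \<times> real" where
  "ds_piT \<psi> \<gamma> u v s =
     (deriv (\<lambda>h. fst (piT \<psi> \<gamma> u v (s + h))) 0, deriv (\<lambda>h. snd (piT \<psi> \<gamma> u v (s + h))) 0)"

definition Sigma1 :: "(real \<times> real \<Rightarrow> real^3) \<Rightarrow> (real \<Rightarrow> real^3) \<Rightarrow> real \<Rightarrow> real \<Rightarrow> real \<Rightarrow> real \<Rightarrow> real \<Rightarrow> (real \<times> real) set \<Rightarrow> pt set" where
  "Sigma1 \<psi> \<gamma> c0 s1 s2 t1 t2 D =
     {((s, t, \<sigma>, \<tau>), (u, v, \<xi>, \<eta>)).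
        parallel2 (piT \<psi> \<gamma> u v s) (grad_uv (\<lambda>u' v'. Rhat \<psi> \<gamma> u' v' s \<bullet> gdot \<gamma> s) u v)}
     \<inter> Lambda' \<psi> \<gamma> c0 s1 s2 t1 t2 D"

definition Sigma2 :: "(real \<times> real \<Rightarrow> real^3) \<Rightarrow> (real \<Rightarrow> real^3) \<Rightarrow> real \<Rightarrow> real \<Rightarrow> real \<Rightarrow> real \<Rightarrow> real \<Rightarrow> (real \<times> real) set \<Rightarrow> pt set" where
  "Sigma2 \<psi> \<gamma> c0 s1 s2 t1 t2 D =
     {((s, t, \<sigma>, \<tau>), (u, v, \<xi>, \<eta>)). parallel2 (piT \<psi> \<gamma> u v s) (ds_piT \<psi> \<gamma> u v s)}
     \<inter> Lambda' \<psi> \<gamma> c0 s1 s2 t1 t2 D"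

end

theory Submission
  imports Defs
begin

text \<open>
  Put \<rho>(s, u, v) = (2/c0) |\<psi>(u, v) - \<gamma>(s)|, the travel time. Away from the zero section,
  \<Lambda>' is the image of the open set of points (s, u, v, \<tau>) with \<tau> \<noteq> 0 and \<rho> \<in> (t1, t2) under
  \<phi>(s, u, v, \<tau>) = ((s, \<rho>, -\<tau> \<rho>_s, \<tau>), (u, v, \<tau> \<rho>_u, \<tau> \<rho>_v)), the graph of the differential
  of the phase \<tau> (t - \<rho>). Hence \<Lambda>' is a submanifold (\<phi> is an injective immersion with
  continuous inverse), conic (\<rho> does not depend on \<tau>) and Lagrangian (the Hessian of \<rho> is
  symmetric).

  The projection of d\<phi> to T*Y is onto iff (\<rho>_u, \<rho>_v) and (\<rho>_su, \<rho>_sv) are independent,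
  and the projection to T*X is onto iff (\<rho>_u, \<rho>_v) and (\<rho>_us, \<rho>_vs) are. Since
  piT = (c0/2) (\<rho>_u, \<rho>_v), grad_uv (Rhat \<bullet> gdot) = -(c0/2) (\<rho>_su, \<rho>_sv) and
  ds_piT = (c0/2) (\<rho>_us, \<rho>_vs), these conditions say exactly that the point lies outside
  \<Sigma>1 and \<Sigma>2.
\<close>

section \<open>Directional derivatives\<close>

lemma eventually_line_in_open:
  fixes x b :: "'a::real_normed_vector"
  assumes "open S" "x \<in> S"
  shows "\<forall>\<^sub>F h in nhds (0::real). x + h *\<^sub>R b \<in> S"
proof -
  have "continuous_on UNIV (\<lambda>h::real. x + h *\<^sub>R b)"
    by (intro continuous_intros)
  then have "open ((\<lambda>h::real. x + h *\<^sub>R b) -` S)"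
    using assms(1) open_vimage by blast
  then show ?thesis
    using eventually_nhds_in_open[of _ 0] assms(2) by fastforce
qed

definition dir_deriv :: "'a::real_normed_vector \<Rightarrow> ('a \<Rightarrow> real) \<Rightarrow> 'a \<Rightarrow> real" where
  "dir_deriv b f x = deriv (\<lambda>h. f (x + h *\<^sub>R b)) 0"

lemma iter_dderiv_Cons: "iter_dderiv (b # bs) f = dir_deriv b (iter_dderiv bs f)"
  by (simp add: dir_deriv_def fun_eq_iff)

lemma has_real_derivative_along_line_shift:
  fixes f :: "'a::real_normed_vector \<Rightarrow> real"
  assumes "((\<lambda>h. f (z + h0 *\<^sub>R b + h *\<^sub>R b)) has_real_derivative D) (at 0)"
  shows "((\<lambda>h. f (z + h *\<^sub>R b)) has_real_derivative D) (at h0)"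
proof -
  have "(\<lambda>h. f (z + (h + h0) *\<^sub>R b)) = (\<lambda>h. f (z + h0 *\<^sub>R b + h *\<^sub>R b))"
    by (simp add: scaleR_add_left algebra_simps)
  then show ?thesis
    using assms DERIV_shift[of "\<lambda>h. f (z + h *\<^sub>R b)" D 0 h0] by simp
qed

lemma dir_deriv_translation_invariant:
  fixes f :: "'a::real_normed_vector \<Rightarrow> real"
  assumes "\<And>y h. f (y + h *\<^sub>R e) = f y"
  shows "dir_deriv b f (y + h *\<^sub>R e) = dir_deriv b f y"
    and "dir_deriv e f y = 0"
proof -
  have "f (y + h *\<^sub>R e + k *\<^sub>R b) = f (y + k *\<^sub>R b)" for k
    using assms[of "y + k *\<^sub>R b" h] by (simp add: add_ac)
  then show "dir_deriv b f (y + h *\<^sub>R e) = dir_deriv b f y"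
    by (simp add: dir_deriv_def)
  show "dir_deriv e f y = 0"
    using assms by (simp add: dir_deriv_def)
qed

lemma second_difference_mean_value:
  fixes f fb fbc :: "'a::real_normed_vector \<Rightarrow> real"
  assumes t: "t > 0"
    and square: "\<And>h k. 0 \<le> h \<Longrightarrow> h \<le> t \<Longrightarrow> 0 \<le> k \<Longrightarrow> k \<le> t \<Longrightarrow> x + h *\<^sub>R b + k *\<^sub>R c \<in> S"
    and fb: "\<And>y. y \<in> S \<Longrightarrow> ((\<lambda>h. f (y + h *\<^sub>R b)) has_real_derivative fb y) (at 0)"
    and fbc: "\<And>y. y \<in> S \<Longrightarrow> ((\<lambda>k. fb (y + k *\<^sub>R c)) has_real_derivative fbc y) (at 0)"
  obtains \<xi> \<eta> where "0 < \<xi>" "\<xi> < t" "0 < \<eta>" "\<eta> < t"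
    "f (x + t *\<^sub>R b + t *\<^sub>R c) - f (x + t *\<^sub>R b) - f (x + t *\<^sub>R c) + f x
       = t * t * fbc (x + \<xi> *\<^sub>R b + \<eta> *\<^sub>R c)"
proof -
  have in_S: "x + k *\<^sub>R c + h *\<^sub>R b \<in> S" if "0 \<le> h" "h \<le> t" "0 \<le> k" "k \<le> t" for h k
    using square[OF that] by (simp add: algebra_simps)
  have "\<exists>\<xi>>0. \<xi> < t \<and>
      (f (x + t *\<^sub>R c + t *\<^sub>R b) - f (x + t *\<^sub>R b)) - (f (x + t *\<^sub>R c + 0 *\<^sub>R b) - f (x + 0 *\<^sub>R b))
        = (t - 0) * (fb (x + t *\<^sub>R c + \<xi> *\<^sub>R b) - fb (x + \<xi> *\<^sub>R b))"
  proof (rule MVT2[OF t])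
    fix h assume h: "0 \<le> h" "h \<le> t"
    show "((\<lambda>h. f (x + t *\<^sub>R c + h *\<^sub>R b) - f (x + h *\<^sub>R b)) has_real_derivative
        fb (x + t *\<^sub>R c + h *\<^sub>R b) - fb (x + h *\<^sub>R b)) (at h)"
      using in_S[OF h, of t] in_S[OF h, of 0] t
      by (intro DERIV_diff has_real_derivative_along_line_shift[OF fb]) auto
  qed
  then obtain \<xi> where \<xi>: "0 < \<xi>" "\<xi> < t"
    "f (x + t *\<^sub>R c + t *\<^sub>R b) - f (x + t *\<^sub>R b) - (f (x + t *\<^sub>R c) - f x)
       = t * (fb (x + t *\<^sub>R c + \<xi> *\<^sub>R b) - fb (x + \<xi> *\<^sub>R b))"
    by auto
  have "\<exists>\<eta>>0. \<eta> < t \<and> fb (x + \<xi> *\<^sub>R b + t *\<^sub>R c) - fb (x + \<xi> *\<^sub>R b + 0 *\<^sub>R c)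
      = (t - 0) * fbc (x + \<xi> *\<^sub>R b + \<eta> *\<^sub>R c)"
  proof (rule MVT2[OF t])
    fix k assume "0 \<le> k" "k \<le> t"
    then have "x + \<xi> *\<^sub>R b + k *\<^sub>R c \<in> S"
      using \<xi>(1,2) square by simp
    then show "((\<lambda>k. fb (x + \<xi> *\<^sub>R b + k *\<^sub>R c)) has_real_derivative
        fbc (x + \<xi> *\<^sub>R b + k *\<^sub>R c)) (at k)"
      by (rule has_real_derivative_along_line_shift[OF fbc])
  qed
  then obtain \<eta> where \<eta>: "0 < \<eta>" "\<eta> < t"
    "fb (x + \<xi> *\<^sub>R b + t *\<^sub>R c) - fb (x + \<xi> *\<^sub>R b) = t * fbc (x + \<xi> *\<^sub>R b + \<eta> *\<^sub>R c)"
    by auto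
  have "x + t *\<^sub>R c + t *\<^sub>R b = x + t *\<^sub>R b + t *\<^sub>R c"
    "x + t *\<^sub>R c + \<xi> *\<^sub>R b = x + \<xi> *\<^sub>R b + t *\<^sub>R c"
    by (simp_all add: add_ac)
  with \<xi> \<eta> show ?thesis
    by (intro that[of \<xi> \<eta>]) (simp_all add: right_diff_distrib)
qed

lemma small_square_in_ball:
  fixes x b c :: "'a::real_normed_vector"
  assumes "r > 0"
  obtains t where "t > 0"
    "\<And>h k. 0 \<le> h \<Longrightarrow> h \<le> t \<Longrightarrow> 0 \<le> k \<Longrightarrow> k \<le> t \<Longrightarrow> dist (x + h *\<^sub>R b + k *\<^sub>R c) x < r"
proof -
  define t where "t = r / (norm b + norm c + 1)"
  have "norm b + norm c + 1 > 0"
    using norm_ge_zero[of b] norm_ge_zero[of c] by linarith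
  then have "t > 0"
    using assms by (simp add: t_def)
  moreover have "dist (x + h *\<^sub>R b + k *\<^sub>R c) x < r"
    if "0 \<le> h" "h \<le> t" "0 \<le> k" "k \<le> t" for h k
  proof -
    have "dist (x + h *\<^sub>R b + k *\<^sub>R c) x \<le> h * norm b + k * norm c"
      using that norm_triangle_ineq[of "h *\<^sub>R b" "k *\<^sub>R c"] by (simp add: dist_norm)
    also have "\<dots> \<le> t * (norm b + norm c)"
      using that by (simp add: distrib_left add_mono mult_right_mono)
    also have "\<dots> < t * (norm b + norm c + 1)"
      using \<open>t > 0\<close> by simp
    also have "\<dots> = r"
      using \<open>norm b + norm c + 1 > 0\<close> by (simp add: t_def)
    finally show ?thesis .
  qed
  ultimately show ?thesis
    using that by blast
qed

lemma mixed_dir_derivs_eq: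
  fixes f fb fc fbc fcb :: "'a::real_normed_vector \<Rightarrow> real"
  assumes S: "open S" and x: "x \<in> S"
    and fb: "\<And>y. y \<in> S \<Longrightarrow> ((\<lambda>h. f (y + h *\<^sub>R b)) has_real_derivative fb y) (at 0)"
    and fc: "\<And>y. y \<in> S \<Longrightarrow> ((\<lambda>h. f (y + h *\<^sub>R c)) has_real_derivative fc y) (at 0)"
    and fbc: "\<And>y. y \<in> S \<Longrightarrow> ((\<lambda>k. fb (y + k *\<^sub>R c)) has_real_derivative fbc y) (at 0)"
    and fcb: "\<And>y. y \<in> S \<Longrightarrow> ((\<lambda>k. fc (y + k *\<^sub>R b)) has_real_derivative fcb y) (at 0)"
    and cont: "isCont fbc x" "isCont fcb x"
  shows "fbc x = fcb x"
proof (rule ccontr)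
  assume "fbc x \<noteq> fcb x"
  define \<epsilon> where "\<epsilon> = \<bar>fbc x - fcb x\<bar> / 2"
  have "\<epsilon> > 0"
    using \<open>fbc x \<noteq> fcb x\<close> by (simp add: \<epsilon>_def)
  then obtain d1 d2 where d: "d1 > 0" "d2 > 0"
    and near: "\<And>y. dist y x < d1 \<Longrightarrow> dist (fbc y) (fbc x) < \<epsilon>"
      "\<And>y. dist y x < d2 \<Longrightarrow> dist (fcb y) (fcb x) < \<epsilon>"
    using cont unfolding continuous_at_eps_delta by metis
  obtain r0 where r0: "r0 > 0" "ball x r0 \<subseteq> S"
    using S x open_contains_ball by blast
  define r where "r = min r0 (min d1 d2)"
  have "r > 0"
    using r0 d by (simp add: r_def)
  then obtain t where "t > 0" and close:
    "\<And>h k. 0 \<le> h \<Longrightarrow> h \<le> t \<Longrightarrow> 0 \<le> k \<Longrightarrow> k \<le> t \<Longrightarrow> dist (x + h *\<^sub>R b + k *\<^sub>R c) x < r"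
    using small_square_in_ball by metis
  have in_S: "x + h *\<^sub>R b + k *\<^sub>R c \<in> S" "x + k *\<^sub>R c + h *\<^sub>R b \<in> S"
    if "0 \<le> h" "h \<le> t" "0 \<le> k" "k \<le> t" for h k
    using close[OF that] r0(2) by (auto simp: r_def dist_commute add_ac)
  \<comment> \<open>the second difference of f over the square is t * t times either mixed derivative
    at some point of the square\<close>
  obtain \<xi> \<eta> where \<xi>\<eta>: "0 < \<xi>" "\<xi> < t" "0 < \<eta>" "\<eta> < t"
    "f (x + t *\<^sub>R b + t *\<^sub>R c) - f (x + t *\<^sub>R b) - f (x + t *\<^sub>R c) + f x
       = t * t * fbc (x + \<xi> *\<^sub>R b + \<eta> *\<^sub>R c)"
    using second_difference_mean_value[OF \<open>t > 0\<close> in_S(1) fb fbc] by blast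
  obtain \<xi>' \<eta>' where \<xi>\<eta>': "0 < \<xi>'" "\<xi>' < t" "0 < \<eta>'" "\<eta>' < t"
    "f (x + t *\<^sub>R c + t *\<^sub>R b) - f (x + t *\<^sub>R c) - f (x + t *\<^sub>R b) + f x
       = t * t * fcb (x + \<xi>' *\<^sub>R c + \<eta>' *\<^sub>R b)"
    using second_difference_mean_value[OF \<open>t > 0\<close> in_S(2) fc fcb] by blast
  have "x + t *\<^sub>R c + t *\<^sub>R b = x + t *\<^sub>R b + t *\<^sub>R c"
    "x + \<xi>' *\<^sub>R c + \<eta>' *\<^sub>R b = x + \<eta>' *\<^sub>R b + \<xi>' *\<^sub>R c"
    by (simp_all add: add_ac)
  with \<xi>\<eta>(5) \<xi>\<eta>'(5)
  have "t * t * fbc (x + \<xi> *\<^sub>R b + \<eta> *\<^sub>R c) = t * t * fcb (x + \<eta>' *\<^sub>R b + \<xi>' *\<^sub>R c)"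
    by (smt (verit))
  then have "fbc (x + \<xi> *\<^sub>R b + \<eta> *\<^sub>R c) = fcb (x + \<eta>' *\<^sub>R b + \<xi>' *\<^sub>R c)"
    using \<open>t > 0\<close> by simp
  moreover have "dist (fbc (x + \<xi> *\<^sub>R b + \<eta> *\<^sub>R c)) (fbc x) < \<epsilon>"
    using close[of \<xi> \<eta>] \<xi>\<eta> near(1) by (simp add: r_def)
  moreover have "dist (fcb (x + \<eta>' *\<^sub>R b + \<xi>' *\<^sub>R c)) (fcb x) < \<epsilon>"
    using close[of \<eta>' \<xi>'] \<xi>\<eta>' near(2) by (simp add: r_def)
  ultimately have "\<bar>fbc x - fcb x\<bar> < 2 * \<epsilon>"
    by (simp add: dist_real_def)
  then show False
    by (simp add: \<epsilon>_def)
qed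

lemma differentiable_at_of_continuous_partial:
  fixes g g2 :: "real \<times> real \<Rightarrow> real"
  assumes D: "open D" and p: "p \<in> D"
    and d1: "((\<lambda>h. g (p + h *\<^sub>R (1, 0))) has_real_derivative g1) (at 0)"
    and d2: "\<And>q. q \<in> D \<Longrightarrow> ((\<lambda>h. g (q + h *\<^sub>R (0, 1))) has_real_derivative g2 q) (at 0)"
    and c2: "continuous_on D g2"
  shows "g differentiable (at p)"
proof -
  obtain a c where p_eq: "p = (a, c)"
    by (cases p)
  obtain X Y' where XY': "open X" "open Y'" "p \<in> X \<times> Y'" "X \<times> Y' \<subseteq> D"
    using open_prod_elim[OF D p] by metis
  obtain r where "r > 0" "ball c r \<subseteq> Y'"
    using XY' p_eq open_contains_ball by blast
  define Y where "Y = ball c r"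
  have XY: "open (X \<times> Y)" "(a, c) \<in> X \<times> Y" "X \<times> Y \<subseteq> D"
    using XY' \<open>r > 0\<close> \<open>ball c r \<subseteq> Y'\<close> p_eq by (auto simp: Y_def open_Times)
  have "((\<lambda>h. g (h + a, c)) has_real_derivative g1) (at 0)"
    using d1 by (simp add: p_eq add.commute)
  then have "((\<lambda>x. g (x, c)) has_real_derivative g1) (at a)"
    using DERIV_shift[of "\<lambda>x. g (x, c)" g1 0 a] by simp
  then have fx: "((\<lambda>x. g (x, c)) has_derivative (*) g1) (at a within X)"
    by (simp add: has_field_derivative_def has_derivative_at_withinI)
  have fy: "((\<lambda>y. g (x, y)) has_derivative blinfun_apply (blinfun_mult_left (g2 (x, y)))) (at y within Y)"
    if "x \<in> X" "y \<in> Y" for x y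
  proof -
    have "((\<lambda>h. g (x, h + y)) has_real_derivative g2 (x, y)) (at 0)"
      using d2[of "(x, y)"] that XY(3) by (auto simp: add.commute)
    then have "((\<lambda>h. g (x, h)) has_real_derivative g2 (x, y)) (at y)"
      using DERIV_shift[of "\<lambda>h. g (x, h)" "g2 (x, y)" 0 y] by simp
    then have "((\<lambda>h. g (x, h)) has_derivative (\<lambda>h. h * g2 (x, y))) (at y)"
      by (simp add: has_field_derivative_def mult_commute_abs)
    then show ?thesis
      by (simp add: has_derivative_at_withinI)
  qed
  have "continuous (at (a, c) within X \<times> Y) g2"
    using c2 D p p_eq continuous_on_eq_continuous_at continuous_at_imp_continuous_within by blast
  then have fy_cont: "continuous (at (a, c) within X \<times> Y) (\<lambda>(x, y). blinfun_mult_left (g2 (x, y)))"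
    by (intro continuous_blinfun_componentwiseI1) (simp add: split_def continuous_intros)
  have "((\<lambda>(x, y). g (x, y)) has_derivative
      (\<lambda>(tx, ty). g1 * tx + blinfun_mult_left (g2 (a, c)) ty)) (at (a, c) within X \<times> Y)"
    using XY(2) by (intro has_derivative_partialsI[OF fx fy fy_cont]) (auto simp: Y_def)
  then show ?thesis
    using XY p_eq at_within_open[OF XY(2,1)] by (auto intro: differentiableI)
qed

lemma has_derivative_of_dir_derivs:
  fixes f :: "'a::euclidean_space \<Rightarrow> real"
  assumes "f differentiable (at x)"
    and D: "\<And>b. b \<in> Basis \<Longrightarrow> ((\<lambda>h. f (x + h *\<^sub>R b)) has_real_derivative D b) (at 0)"
  shows "(f has_derivative (\<lambda>a. \<Sum>b\<in>Basis. (a \<bullet> b) * D b)) (at x)"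
proof -
  obtain L where L: "(f has_derivative L) (at x)"
    using assms(1) by (auto simp: differentiable_def)
  then have "linear L"
    using has_derivative_linear by blast
  have L_Basis: "L b = D b" if "b \<in> Basis" for b
  proof -
    have "((\<lambda>h::real. x + h *\<^sub>R b) has_derivative (\<lambda>h. h *\<^sub>R b)) (at 0)"
      by (auto intro!: derivative_eq_intros)
    moreover have "(f has_derivative L) (at (x + 0 *\<^sub>R b))"
      using L by simp
    ultimately have "((\<lambda>h. f (x + h *\<^sub>R b)) has_derivative (\<lambda>h. L (h *\<^sub>R b))) (at 0)"
      by (rule has_derivative_compose)
    moreover have "(\<lambda>h. L (h *\<^sub>R b)) = (*) (L b)"
      using \<open>linear L\<close> by (auto simp: fun_eq_iff linear_scale)
    ultimately have "((\<lambda>h. f (x + h *\<^sub>R b)) has_real_derivative L b) (at 0)"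
      by (simp add: has_field_derivative_def)
    then show ?thesis
      using D[OF that] DERIV_unique by blast
  qed
  have "L = (\<lambda>a. \<Sum>b\<in>Basis. (a \<bullet> b) * D b)"
  proof (rule ext)
    fix a
    have "L a = L (\<Sum>b\<in>Basis. (a \<bullet> b) *\<^sub>R b)"
      by (simp add: euclidean_representation)
    also have "\<dots> = (\<Sum>b\<in>Basis. (a \<bullet> b) * L b)"
      using \<open>linear L\<close> by (simp add: linear_sum linear_scale)
    finally show "L a = (\<Sum>b\<in>Basis. (a \<bullet> b) * D b)"
      by (simp add: L_Basis)
  qed
  with L show ?thesis
    by simp
qed

lemma has_real_derivative_norm:
  fixes F :: "real \<Rightarrow> 'a::real_inner"
  assumes "(F has_vector_derivative F') (at t)" "F t \<noteq> 0"
  shows "((\<lambda>h. norm (F h)) has_real_derivative F' \<bullet> sgn (F t)) (at t)"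
proof -
  have "((\<lambda>h. norm (F h)) has_derivative (\<lambda>h. (h *\<^sub>R F') \<bullet> sgn (F t))) (at t)"
    using has_derivative_compose[OF assms(1)[unfolded has_vector_derivative_def]
        has_derivative_norm[OF assms(2)]] .
  moreover have "(\<lambda>h. (h *\<^sub>R F') \<bullet> sgn (F t)) = (*) (F' \<bullet> sgn (F t))"
    by (auto simp: fun_eq_iff)
  ultimately show ?thesis
    by (simp add: has_field_derivative_def)
qed

lemma smooth_on_set_subset: "smooth_on_set S f \<Longrightarrow> T \<subseteq> S \<Longrightarrow> smooth_on_set T f"
  unfolding smooth_on_set_def by (meson continuous_on_subset subsetD)

lemma smooth_on_set_continuous_partial:
  "smooth_on_set S f \<Longrightarrow> set bs \<subseteq> Basis \<Longrightarrow> c \<in> Basis \<Longrightarrow>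
    continuous_on S (iter_dderiv bs (\<lambda>x. f x \<bullet> c))"
  unfolding smooth_on_set_def by blast

lemma smooth_on_set_has_partial:
  assumes "smooth_on_set S f" "set bs \<subseteq> Basis" "c \<in> Basis" "b \<in> Basis" "x \<in> S"
  shows "((\<lambda>h. iter_dderiv bs (\<lambda>x. f x \<bullet> c) (x + h *\<^sub>R b)) has_real_derivative
           iter_dderiv (b # bs) (\<lambda>x. f x \<bullet> c) x) (at 0)"
proof -
  have "(\<lambda>h. iter_dderiv bs (\<lambda>x. f x \<bullet> c) (x + h *\<^sub>R b)) differentiable (at 0)"
    using assms unfolding smooth_on_set_def by blast
  then show ?thesis
    by (simp add: DERIV_deriv_iff_real_differentiable)
qed

lemma parallel2_iff_det: "parallel2 (a1, a2) (b1, b2) \<longleftrightarrow> a1 * b2 - a2 * b1 = 0"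
proof
  assume "parallel2 (a1, a2) (b1, b2)"
  then obtain x y where xy: "(x, y) \<noteq> (0, 0)" "x * a1 + y * b1 = 0" "x * a2 + y * b2 = 0"
    by (auto simp: parallel2_def zero_prod_def)
  have "x * (a1 * b2 - a2 * b1) = (x * a1 + y * b1) * b2 - (x * a2 + y * b2) * b1"
    "y * (a1 * b2 - a2 * b1) = (x * a2 + y * b2) * a1 - (x * a1 + y * b1) * a2"
    by (simp_all add: algebra_simps)
  then have "x * (a1 * b2 - a2 * b1) = 0" "y * (a1 * b2 - a2 * b1) = 0"
    using xy(2,3) by simp_all
  then show "a1 * b2 - a2 * b1 = 0"
    using xy(1) by auto
next
  assume det: "a1 * b2 - a2 * b1 = 0"
  show "parallel2 (a1, a2) (b1, b2)"
  proof (cases "(b1, b2) = (0, 0)")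
    case True
    show ?thesis
      unfolding parallel2_def
      by (rule exI[of _ "0::real"], rule exI[of _ "1::real"]) (use True in \<open>simp add: zero_prod_def\<close>)
  next
    case False
    show ?thesis
    proof (cases "b2 = 0")
      case False
      show ?thesis
        unfolding parallel2_def
        by (rule exI[of _ b2], rule exI[of _ "- a2"]) (use False det in \<open>simp add: zero_prod_def algebra_simps\<close>)
    next
      case True
      show ?thesis
        unfolding parallel2_def
        by (rule exI[of _ b1], rule exI[of _ "- a1"])
          (use True \<open>(b1, b2) \<noteq> (0, 0)\<close> det in \<open>simp add: zero_prod_def algebra_simps\<close>)
    qed
  qed
qed

lemma parallel2_scaleR:
  fixes p q :: "real \<times> real"
  assumes "a \<noteq> 0" "b \<noteq> 0"
  shows "parallel2 (a *\<^sub>R p) (b *\<^sub>R q) \<longleftrightarrow> parallel2 p q"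
proof -
  obtain p1 p2 q1 q2 where "p = (p1, p2)" "q = (q1, q2)"
    by fastforce
  moreover have "(a * p1) * (b * q2) - (a * p2) * (b * q1) = (a * b) * (p1 * q2 - p2 * q1)"
    by (simp add: algebra_simps)
  ultimately show ?thesis
    using assms by (simp add: parallel2_iff_det)
qed

lemma linear_system2_solvable:
  fixes a b c d :: real
  assumes "a * d - b * c \<noteq> 0"
  shows "\<exists>x y. a * x + b * y = p \<and> c * x + d * y = q"
proof (intro exI conjI)
  define \<delta> where "\<delta> = a * d - b * c"
  have "a * (p * d - b * q) + b * (a * q - c * p) = p * \<delta>"
    "c * (p * d - b * q) + d * (a * q - c * p) = q * \<delta>"
    by (simp_all add: \<delta>_def algebra_simps)
  then show "a * ((p * d - b * q) / \<delta>) + b * ((a * q - c * p) / \<delta>) = p"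
    and "c * ((p * d - b * q) / \<delta>) + d * ((a * q - c * p) / \<delta>) = q"
    using assms by (simp_all add: \<delta>_def add_divide_distrib[symmetric] times_divide_eq_right)
qed

lemma Basis_R2: "(Basis :: (real \<times> real) set) = {(1, 0), (0, 1)}"
  by (simp add: Basis_prod_def zero_prod_def insert_commute)

lemma Basis_R4: "(Basis :: R4 set) = {(1, 0, 0, 0), (0, 1, 0, 0), (0, 0, 1, 0), (0, 0, 0, 1)}"
  by (simp add: Basis_prod_def zero_prod_def image_Un insert_commute)

abbreviation e_s :: R4 where "e_s \<equiv> (1, 0, 0, 0)"
abbreviation e_u :: R4 where "e_u \<equiv> (0, 1, 0, 0)"
abbreviation e_v :: R4 where "e_v \<equiv> (0, 0, 1, 0)"
abbreviation e_tau :: R4 where "e_tau \<equiv> (0, 0, 0, 1)"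

definition uv :: "R4 \<Rightarrow> real \<times> real" where
  "uv x = (fst (snd x), fst (snd (snd x)))"

definition tau :: "R4 \<Rightarrow> real" where
  "tau x = snd (snd (snd x))"

definition dsuv :: "(R4 \<Rightarrow> real) \<Rightarrow> R4 \<Rightarrow> R4 \<Rightarrow> real" where
  "dsuv f x a = fst a * dir_deriv e_s f x + fst (snd a) * dir_deriv e_u f x
     + fst (snd (snd a)) * dir_deriv e_v f x"

lemma bounded_linear_tau: "bounded_linear tau"
  unfolding tau_def by (intro bounded_linear_intros)

lemma bounded_linear_uv: "bounded_linear uv"
  unfolding uv_def by (intro bounded_linear_intros)

lemma uv_add_scaleR: "uv (x + h *\<^sub>R b) = uv x + h *\<^sub>R uv b"
  by (simp add: uv_def)

lemma uv_Basis: "b \<in> Basis \<Longrightarrow> uv b = 0 \<or> uv b \<in> Basis"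
  by (auto simp: Basis_R4 Basis_R2 uv_def zero_prod_def)

lemma fst_Basis: "b \<in> (Basis :: R4 set) \<Longrightarrow> fst b = 0 \<or> fst b = 1"
  by (auto simp: Basis_R4)

lemma sgn_Rv: "sgn (Rv \<psi> \<gamma> u v s) = Rhat \<psi> \<gamma> u v s"
  by (simp add: Rhat_def sgn_div_norm inverse_eq_divide)

lemma piT_eq: "piT \<psi> \<gamma> u v s = (Rhat \<psi> \<gamma> u v s \<bullet> psi_u \<psi> u v, Rhat \<psi> \<gamma> u v s \<bullet> psi_v \<psi> u v)"
proof -
  have "unit_normal \<psi> u v \<bullet> psi_u \<psi> u v = 0" "unit_normal \<psi> u v \<bullet> psi_v \<psi> u v = 0"
    using dot_cross_self(1,3)[of "psi_u \<psi> u v" "psi_v \<psi> u v"]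
    by (simp_all add: unit_normal_def inner_commute)
  then show ?thesis
    by (simp add: piT_def inner_diff_left)
qed

section \<open>Smooth functions on the parameter domain\<close>

locale sar_geometry =
  fixes \<psi> :: "real \<times> real \<Rightarrow> real^3" and \<gamma> :: "real \<Rightarrow> real^3"
    and D :: "(real \<times> real) set" and c0 s1 s2 t1 t2 :: real
  assumes c0: "c0 > 0"
    and D_open: "open D"
    and psi_smooth: "smooth_on_set D \<psi>"
    and psi_imm: "\<forall>x\<in>D. \<exists>L. (\<psi> has_derivative L) (at x) \<and> inj L"
    and gamma_smooth: "smooth_on_set {s1<..<s2} \<gamma>"
    and dist_pos: "\<exists>\<delta>>0. \<forall>x\<in>D. \<forall>s\<in>{s1<..<s2}. \<delta> \<le> dist (\<psi> x) (\<gamma> s)"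
begin

definition A0 :: "R4 set" where
  "A0 = {x. fst x \<in> {s1<..<s2} \<and> uv x \<in> D}"

lemma open_A0: "open A0"
proof -
  have "A0 = fst -` {s1<..<s2} \<inter> uv -` D"
    by (auto simp: A0_def)
  moreover have "open (fst -` {s1<..<s2} :: R4 set)"
    by (rule open_vimage_fst) simp
  moreover have "open (uv -` D)"
    using open_vimage[OF D_open linear_continuous_on[OF bounded_linear_uv]] .
  ultimately show ?thesis
    by auto
qed

lemma uv_A0: "x \<in> A0 \<Longrightarrow> uv x \<in> D"
  by (simp add: A0_def)

lemma fst_A0: "x \<in> A0 \<Longrightarrow> fst x \<in> {s1<..<s2}"
  by (simp add: A0_def)

text \<open>
  Instead of a general calculus of smooth functions we use a class of functions on A0 that is
  generated by the data \<psi>, \<gamma> and is large enough to contain \<rho>; smooth_fun_C1 shows that it is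
  closed under partial differentiation, which yields the smoothness of \<phi> and the symmetry of
  second derivatives.
\<close>

inductive smooth_fun :: "(R4 \<Rightarrow> real) \<Rightarrow> bool" where
  const: "smooth_fun (\<lambda>x. c)"
| inner: "smooth_fun (\<lambda>x. x \<bullet> w)"
| add: "smooth_fun f \<Longrightarrow> smooth_fun g \<Longrightarrow> smooth_fun (\<lambda>x. f x + g x)"
| mult: "smooth_fun f \<Longrightarrow> smooth_fun g \<Longrightarrow> smooth_fun (\<lambda>x. f x * g x)"
| inverse: "smooth_fun f \<Longrightarrow> \<forall>x\<in>A0. f x \<noteq> 0 \<Longrightarrow> smooth_fun (\<lambda>x. inverse (f x))"
| sqrt: "smooth_fun f \<Longrightarrow> \<forall>x\<in>A0. f x > 0 \<Longrightarrow> smooth_fun (\<lambda>x. sqrt (f x))"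
| psi: "set bs \<subseteq> Basis \<Longrightarrow> e \<in> Basis \<Longrightarrow> smooth_fun (\<lambda>x. iter_dderiv bs (\<lambda>y. \<psi> y \<bullet> e) (uv x))"
| gamma: "set bs \<subseteq> Basis \<Longrightarrow> e \<in> Basis \<Longrightarrow> smooth_fun (\<lambda>x. iter_dderiv bs (\<lambda>y. \<gamma> y \<bullet> e) (fst x))"
| eq_on: "smooth_fun g \<Longrightarrow> \<forall>x\<in>A0. f x = g x \<Longrightarrow> smooth_fun f"

lemma smooth_fun_uminus: "smooth_fun f \<Longrightarrow> smooth_fun (\<lambda>x. - f x)"
  by (rule smooth_fun.eq_on[OF smooth_fun.mult[OF smooth_fun.const[of "-1"]]]) auto

lemma smooth_fun_diff: "smooth_fun f \<Longrightarrow> smooth_fun g \<Longrightarrow> smooth_fun (\<lambda>x. f x - g x)"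
  using smooth_fun.add[OF _ smooth_fun_uminus, of f g] by simp

lemma smooth_fun_sum:
  "finite I \<Longrightarrow> (\<And>i. i \<in> I \<Longrightarrow> smooth_fun (F i)) \<Longrightarrow> smooth_fun (\<lambda>x. \<Sum>i\<in>I. F i x)"
  by (induction I rule: finite_induct) (simp_all add: smooth_fun.const smooth_fun.add)

definition C1_smooth_partials :: "(R4 \<Rightarrow> real) \<Rightarrow> bool" where
  "C1_smooth_partials f \<longleftrightarrow> continuous_on A0 f \<and> (\<forall>x\<in>A0. f differentiable (at x)) \<and>
     (\<forall>b\<in>Basis. \<exists>g. smooth_fun g \<and> (\<forall>x\<in>A0. ((\<lambda>h. f (x + h *\<^sub>R b)) has_real_derivative g x) (at 0)))"

lemma C1_smooth_partialsD:
  assumes "C1_smooth_partials f" "b \<in> Basis"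
  obtains f' where "smooth_fun f'"
    "\<And>x. x \<in> A0 \<Longrightarrow> ((\<lambda>h. f (x + h *\<^sub>R b)) has_real_derivative f' x) (at 0)"
  using assms unfolding C1_smooth_partials_def by blast

lemma C1_smooth_partials_const: "C1_smooth_partials (\<lambda>x. c)"
  unfolding C1_smooth_partials_def by (auto intro!: exI[of _ "\<lambda>x. 0"] smooth_fun.const)

lemma C1_smooth_partials_inner: "C1_smooth_partials (\<lambda>x. x \<bullet> w)"
  unfolding C1_smooth_partials_def
proof (intro conjI ballI)
  show "continuous_on A0 (\<lambda>x. x \<bullet> w)"
    by (intro continuous_intros)
  show "(\<lambda>x. x \<bullet> w) differentiable (at x)" for x
    by (intro bounded_linear_imp_differentiable bounded_linear_inner_left)
  have "((\<lambda>h. (x + h *\<^sub>R b) \<bullet> w) has_real_derivative b \<bullet> w) (at 0)" for x b :: R4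
    unfolding inner_add_left inner_scaleR_left by (auto intro!: derivative_eq_intros)
  then show "\<exists>g. smooth_fun g \<and> (\<forall>x\<in>A0. ((\<lambda>h. (x + h *\<^sub>R b) \<bullet> w) has_real_derivative g x) (at 0))"
    for b
    by (blast intro: smooth_fun.const)
qed

lemma C1_smooth_partials_add:
  assumes "C1_smooth_partials f" "C1_smooth_partials g"
  shows "C1_smooth_partials (\<lambda>x. f x + g x)"
  unfolding C1_smooth_partials_def
proof (intro conjI ballI)
  show "continuous_on A0 (\<lambda>x. f x + g x)" "\<And>x. x \<in> A0 \<Longrightarrow> (\<lambda>x. f x + g x) differentiable (at x)"
    using assms by (auto simp: C1_smooth_partials_def intro: continuous_on_add)
  fix b :: R4 assume "b \<in> Basis"
  obtain f' where f': "smooth_fun f'"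
    "\<And>x. x \<in> A0 \<Longrightarrow> ((\<lambda>h. f (x + h *\<^sub>R b)) has_real_derivative f' x) (at 0)"
    using C1_smooth_partialsD[OF assms(1) \<open>b \<in> Basis\<close>] by blast
  obtain g' where g': "smooth_fun g'"
    "\<And>x. x \<in> A0 \<Longrightarrow> ((\<lambda>h. g (x + h *\<^sub>R b)) has_real_derivative g' x) (at 0)"
    using C1_smooth_partialsD[OF assms(2) \<open>b \<in> Basis\<close>] by blast
  show "\<exists>d. smooth_fun d \<and>
      (\<forall>x\<in>A0. ((\<lambda>h. f (x + h *\<^sub>R b) + g (x + h *\<^sub>R b)) has_real_derivative d x) (at 0))"
    using f' g' by (intro exI[of _ "\<lambda>x. f' x + g' x"]) (simp add: smooth_fun.add DERIV_add)
qed

lemma C1_smooth_partials_mult: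
  assumes "smooth_fun f" "smooth_fun g" "C1_smooth_partials f" "C1_smooth_partials g"
  shows "C1_smooth_partials (\<lambda>x. f x * g x)"
  unfolding C1_smooth_partials_def
proof (intro conjI ballI)
  show "continuous_on A0 (\<lambda>x. f x * g x)" "\<And>x. x \<in> A0 \<Longrightarrow> (\<lambda>x. f x * g x) differentiable (at x)"
    using assms by (auto simp: C1_smooth_partials_def intro: continuous_on_mult)
  fix b :: R4 assume "b \<in> Basis"
  obtain f' where f': "smooth_fun f'"
    "\<And>x. x \<in> A0 \<Longrightarrow> ((\<lambda>h. f (x + h *\<^sub>R b)) has_real_derivative f' x) (at 0)"
    using C1_smooth_partialsD[OF assms(3) \<open>b \<in> Basis\<close>] by blast
  obtain g' where g': "smooth_fun g'"
    "\<And>x. x \<in> A0 \<Longrightarrow> ((\<lambda>h. g (x + h *\<^sub>R b)) has_real_derivative g' x) (at 0)"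
    using C1_smooth_partialsD[OF assms(4) \<open>b \<in> Basis\<close>] by blast
  have "((\<lambda>h. f (x + h *\<^sub>R b) * g (x + h *\<^sub>R b)) has_real_derivative
      f' x * g x + f x * g' x) (at 0)" if "x \<in> A0" for x
    using DERIV_mult'[OF f'(2)[OF that] g'(2)[OF that]] by (simp add: algebra_simps)
  then show "\<exists>d. smooth_fun d \<and>
      (\<forall>x\<in>A0. ((\<lambda>h. f (x + h *\<^sub>R b) * g (x + h *\<^sub>R b)) has_real_derivative d x) (at 0))"
    using assms(1,2) f'(1) g'(1)
    by (intro exI[of _ "\<lambda>x. f' x * g x + f x * g' x"]) (simp add: smooth_fun.add smooth_fun.mult)
qed

lemma C1_smooth_partials_inverse:
  assumes "smooth_fun f" "\<forall>x\<in>A0. f x \<noteq> 0" "C1_smooth_partials f"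
  shows "C1_smooth_partials (\<lambda>x. inverse (f x))"
  unfolding C1_smooth_partials_def
proof (intro conjI ballI)
  show "continuous_on A0 (\<lambda>x. inverse (f x))" "\<And>x. x \<in> A0 \<Longrightarrow> (\<lambda>x. inverse (f x)) differentiable (at x)"
    using assms by (auto simp: C1_smooth_partials_def intro: continuous_on_inverse)
  fix b :: R4 assume "b \<in> Basis"
  obtain f' where f': "smooth_fun f'"
    "\<And>x. x \<in> A0 \<Longrightarrow> ((\<lambda>h. f (x + h *\<^sub>R b)) has_real_derivative f' x) (at 0)"
    using C1_smooth_partialsD[OF assms(3) \<open>b \<in> Basis\<close>] by blast
  have "((\<lambda>h. inverse (f (x + h *\<^sub>R b))) has_real_derivative
      - (f' x * (inverse (f x) * inverse (f x)))) (at 0)" if "x \<in> A0" for x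
    using DERIV_inverse_fun[OF f'(2)[OF that]] assms(2) that by (simp add: power2_eq_square)
  then show "\<exists>d. smooth_fun d \<and>
      (\<forall>x\<in>A0. ((\<lambda>h. inverse (f (x + h *\<^sub>R b))) has_real_derivative d x) (at 0))"
    using assms(1,2) f'(1)
    by (intro exI[of _ "\<lambda>x. - (f' x * (inverse (f x) * inverse (f x)))"])
      (simp add: smooth_fun_uminus smooth_fun.mult smooth_fun.inverse)
qed

lemma C1_smooth_partials_sqrt:
  assumes "smooth_fun f" "\<forall>x\<in>A0. f x > 0" "C1_smooth_partials f"
  shows "C1_smooth_partials (\<lambda>x. sqrt (f x))"
  unfolding C1_smooth_partials_def
proof (intro conjI ballI)
  show "continuous_on A0 (\<lambda>x. sqrt (f x))"
    using assms by (auto simp: C1_smooth_partials_def intro: continuous_on_real_sqrt)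
  have sqrt_deriv: "(sqrt has_real_derivative inverse (sqrt (f x)) / 2) (at (f x))" if "x \<in> A0" for x
    using DERIV_real_sqrt assms(2) that by blast
  show "(\<lambda>x. sqrt (f x)) differentiable (at x)" if "x \<in> A0" for x
  proof (rule differentiable_compose[of sqrt f])
    show "sqrt differentiable (at (f x))"
      using sqrt_deriv[OF that] by (auto simp: has_field_derivative_def intro: differentiableI)
    show "f differentiable (at x)"
      using assms(3) that by (simp add: C1_smooth_partials_def)
  qed
  fix b :: R4 assume "b \<in> Basis"
  obtain f' where f': "smooth_fun f'"
    "\<And>x. x \<in> A0 \<Longrightarrow> ((\<lambda>h. f (x + h *\<^sub>R b)) has_real_derivative f' x) (at 0)"
    using C1_smooth_partialsD[OF assms(3) \<open>b \<in> Basis\<close>] by blast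
  have "((\<lambda>h. sqrt (f (x + h *\<^sub>R b))) has_real_derivative
      f' x * (inverse (sqrt (f x)) * (1 / 2))) (at 0)" if "x \<in> A0" for x
  proof -
    have "((\<lambda>h. sqrt (f (x + h *\<^sub>R b))) has_real_derivative inverse (sqrt (f x)) / 2 * f' x) (at 0)"
      using DERIV_chain2[OF _ f'(2)[OF that], of sqrt] sqrt_deriv[OF that] by (simp only: add_0_right scaleR_zero_left)
    then show ?thesis
      by (simp add: ac_simps)
  qed
  moreover have "smooth_fun (\<lambda>x. f' x * (inverse (sqrt (f x)) * (1 / 2)))"
    using assms(1,2) f'(1) by (intro smooth_fun.mult smooth_fun.inverse smooth_fun.sqrt smooth_fun.const) auto
  ultimately show "\<exists>d. smooth_fun d \<and>
      (\<forall>x\<in>A0. ((\<lambda>h. sqrt (f (x + h *\<^sub>R b))) has_real_derivative d x) (at 0))"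
    by blast
qed

lemma C1_smooth_partials_eq_on:
  assumes "C1_smooth_partials g" "\<forall>x\<in>A0. f x = g x"
  shows "C1_smooth_partials f"
  unfolding C1_smooth_partials_def
proof (intro conjI ballI)
  show "continuous_on A0 f"
    using assms continuous_on_cong by (fastforce simp: C1_smooth_partials_def)
  show "f differentiable (at x)" if "x \<in> A0" for x
  proof -
    have "g differentiable (at x)"
      using assms(1) that by (simp add: C1_smooth_partials_def)
    then obtain L where "(g has_derivative L) (at x)"
      by (auto simp: differentiable_def)
    then have "(f has_derivative L) (at x)"
      by (rule has_derivative_transform_within_open[OF _ open_A0 that]) (use assms(2) in auto)
    then show ?thesis
      by (rule differentiableI)
  qed
  fix b :: R4 assume "b \<in> Basis"
  obtain g' where g': "smooth_fun g'"
    "\<And>x. x \<in> A0 \<Longrightarrow> ((\<lambda>h. g (x + h *\<^sub>R b)) has_real_derivative g' x) (at 0)"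
    using C1_smooth_partialsD[OF assms(1) \<open>b \<in> Basis\<close>] by blast
  have "((\<lambda>h. f (x + h *\<^sub>R b)) has_real_derivative g' x) (at 0)" if "x \<in> A0" for x
  proof -
    have "\<forall>\<^sub>F h in nhds 0. g (x + h *\<^sub>R b) = f (x + h *\<^sub>R b)"
      using eventually_line_in_open[OF open_A0 that, of b] by eventually_elim (use assms(2) in auto)
    then have "((\<lambda>h. g (x + h *\<^sub>R b)) has_real_derivative g' x) (at 0) \<longleftrightarrow>
        ((\<lambda>h. f (x + h *\<^sub>R b)) has_real_derivative g' x) (at 0)"
      by (rule DERIV_cong_ev[OF refl _ refl])
    then show ?thesis
      using g'(2)[OF that] by simp
  qed
  with g'(1) show "\<exists>d. smooth_fun d \<and> (\<forall>x\<in>A0. ((\<lambda>h. f (x + h *\<^sub>R b)) has_real_derivative d x) (at 0))"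
    by blast
qed

lemma C1_smooth_partials_psi:
  assumes bs: "set bs \<subseteq> Basis" and e: "e \<in> Basis"
  shows "C1_smooth_partials (\<lambda>x. iter_dderiv bs (\<lambda>y. \<psi> y \<bullet> e) (uv x))"
  unfolding C1_smooth_partials_def
proof (intro conjI ballI)
  let ?G = "iter_dderiv bs (\<lambda>y. \<psi> y \<bullet> e)"
  show "continuous_on A0 (\<lambda>x. ?G (uv x))"
    using continuous_on_compose2[OF smooth_on_set_continuous_partial[OF psi_smooth bs e]
        linear_continuous_on[OF bounded_linear_uv]] uv_A0 by blast
  show "(\<lambda>x. ?G (uv x)) differentiable (at x)" if "x \<in> A0" for x
  proof (rule differentiable_compose[of ?G uv])
    have "set ((0, 1) # bs) \<subseteq> Basis" "(1, 0) \<in> (Basis :: (real \<times> real) set)"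
      "(0, 1) \<in> (Basis :: (real \<times> real) set)"
      using bs by (auto simp: Basis_R2)
    then show "?G differentiable (at (uv x))"
      using differentiable_at_of_continuous_partial[OF D_open uv_A0[OF that]
          smooth_on_set_has_partial[OF psi_smooth bs e _ uv_A0[OF that]]
          smooth_on_set_has_partial[OF psi_smooth bs e]
          smooth_on_set_continuous_partial[OF psi_smooth _ e]]
      by blast
    show "uv differentiable (at x)"
      by (rule bounded_linear_imp_differentiable[OF bounded_linear_uv])
  qed
  fix b :: R4 assume b: "b \<in> Basis"
  show "\<exists>g. smooth_fun g \<and> (\<forall>x\<in>A0. ((\<lambda>h. ?G (uv (x + h *\<^sub>R b))) has_real_derivative g x) (at 0))"
  proof (cases "uv b = 0")
    case True
    then show ?thesis
      by (intro exI[of _ "\<lambda>x. 0"]) (simp add: uv_add_scaleR smooth_fun.const)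
  next
    case False
    then have "uv b \<in> Basis"
      using uv_Basis b by blast
    show ?thesis
    proof (intro exI conjI ballI)
      show "smooth_fun (\<lambda>x. iter_dderiv (uv b # bs) (\<lambda>y. \<psi> y \<bullet> e) (uv x))"
        using bs e \<open>uv b \<in> Basis\<close> by (intro smooth_fun.psi) auto
      show "((\<lambda>h. ?G (uv (x + h *\<^sub>R b))) has_real_derivative
          iter_dderiv (uv b # bs) (\<lambda>y. \<psi> y \<bullet> e) (uv x)) (at 0)" if "x \<in> A0" for x
        using smooth_on_set_has_partial[OF psi_smooth bs e \<open>uv b \<in> Basis\<close> uv_A0[OF that]]
        by (simp only: uv_add_scaleR)
    qed
  qed
qed

lemma C1_smooth_partials_gamma:
  assumes bs: "set bs \<subseteq> Basis" and e: "e \<in> Basis"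
  shows "C1_smooth_partials (\<lambda>x. iter_dderiv bs (\<lambda>y. \<gamma> y \<bullet> e) (fst x))"
  unfolding C1_smooth_partials_def
proof (intro conjI ballI)
  let ?G = "iter_dderiv bs (\<lambda>y. \<gamma> y \<bullet> e)"
  have G_deriv: "(?G has_real_derivative iter_dderiv (1 # bs) (\<lambda>y. \<gamma> y \<bullet> e) s) (at s)"
    if "s \<in> {s1<..<s2}" for s
    using smooth_on_set_has_partial[OF gamma_smooth bs e _ that, of 1]
      DERIV_shift[of ?G _ 0 s] by (simp add: add.commute)
  show "continuous_on A0 (\<lambda>x. ?G (fst x))"
    using continuous_on_compose2[OF smooth_on_set_continuous_partial[OF gamma_smooth bs e]
        continuous_on_fst[OF continuous_on_id]] fst_A0 by blast
  show "(\<lambda>x. ?G (fst x)) differentiable (at x)" if "x \<in> A0" for x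
  proof (rule differentiable_compose[of ?G fst])
    show "?G differentiable (at (fst x))"
      using G_deriv[OF fst_A0[OF that]] by (auto simp: has_field_derivative_def intro: differentiableI)
    show "fst differentiable (at x)"
      by (rule bounded_linear_imp_differentiable[OF bounded_linear_fst])
  qed
  fix b :: R4 assume b: "b \<in> Basis"
  show "\<exists>g. smooth_fun g \<and> (\<forall>x\<in>A0. ((\<lambda>h. ?G (fst (x + h *\<^sub>R b))) has_real_derivative g x) (at 0))"
  proof (cases "fst b = 0")
    case True
    then show ?thesis
      by (intro exI[of _ "\<lambda>x. 0"]) (simp add: smooth_fun.const)
  next
    case False
    then have "fst b = 1"
      using fst_Basis b by blast
    show ?thesis
    proof (intro exI conjI ballI)
      show "smooth_fun (\<lambda>x. iter_dderiv (1 # bs) (\<lambda>y. \<gamma> y \<bullet> e) (fst x))"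
        using bs e by (intro smooth_fun.gamma) auto
      show "((\<lambda>h. ?G (fst (x + h *\<^sub>R b))) has_real_derivative
          iter_dderiv (1 # bs) (\<lambda>y. \<gamma> y \<bullet> e) (fst x)) (at 0)" if "x \<in> A0" for x
        using smooth_on_set_has_partial[OF gamma_smooth bs e _ fst_A0[OF that], of 1] \<open>fst b = 1\<close>
        by (simp del: iter_dderiv.simps)
    qed
  qed
qed

theorem smooth_fun_C1: "smooth_fun f \<Longrightarrow> C1_smooth_partials f"
  by (induction rule: smooth_fun.induct)
    (simp_all add: C1_smooth_partials_const C1_smooth_partials_inner C1_smooth_partials_add
      C1_smooth_partials_mult C1_smooth_partials_inverse C1_smooth_partials_sqrt
      C1_smooth_partials_psi C1_smooth_partials_gamma C1_smooth_partials_eq_on)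

lemma smooth_fun_continuous_on: "smooth_fun f \<Longrightarrow> continuous_on A0 f"
  using smooth_fun_C1 by (simp add: C1_smooth_partials_def)

lemma smooth_fun_differentiable: "smooth_fun f \<Longrightarrow> x \<in> A0 \<Longrightarrow> f differentiable (at x)"
  using smooth_fun_C1 by (simp add: C1_smooth_partials_def)

lemma smooth_fun_has_dir_deriv:
  assumes "smooth_fun f" "b \<in> Basis" "x \<in> A0"
  shows "((\<lambda>h. f (x + h *\<^sub>R b)) has_real_derivative dir_deriv b f x) (at 0)"
proof -
  obtain f' where "\<And>x. x \<in> A0 \<Longrightarrow> ((\<lambda>h. f (x + h *\<^sub>R b)) has_real_derivative f' x) (at 0)"
    using C1_smooth_partialsD[OF smooth_fun_C1[OF assms(1)] assms(2)] by blast
  then have "((\<lambda>h. f (x + h *\<^sub>R b)) has_real_derivative f' x) (at 0)"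
    using assms(3) by blast
  moreover from this have "dir_deriv b f x = f' x"
    unfolding dir_deriv_def by (rule DERIV_imp_deriv)
  ultimately show ?thesis
    by simp
qed

lemma smooth_fun_dir_deriv:
  assumes "smooth_fun f" "b \<in> Basis"
  shows "smooth_fun (dir_deriv b f)"
proof -
  obtain f' where "smooth_fun f'"
    and "\<And>x. x \<in> A0 \<Longrightarrow> ((\<lambda>h. f (x + h *\<^sub>R b)) has_real_derivative f' x) (at 0)"
    using C1_smooth_partialsD[OF smooth_fun_C1[OF assms(1)] assms(2)] by blast
  moreover from this(2) have "\<forall>x\<in>A0. dir_deriv b f x = f' x"
    by (simp add: dir_deriv_def DERIV_imp_deriv)
  ultimately show ?thesis
    using smooth_fun.eq_on by blast
qed

lemma smooth_fun_iter_dderiv: "smooth_fun f \<Longrightarrow> set bs \<subseteq> Basis \<Longrightarrow> smooth_fun (iter_dderiv bs f)"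
  by (induction bs) (simp_all add: iter_dderiv_Cons smooth_fun_dir_deriv del: iter_dderiv.simps(2))

lemma smooth_on_set_of_smooth_fun:
  fixes \<phi> :: "R4 \<Rightarrow> 'b::euclidean_space"
  assumes "\<And>c. c \<in> Basis \<Longrightarrow> smooth_fun (\<lambda>x. \<phi> x \<bullet> c)"
  shows "smooth_on_set A0 \<phi>"
  unfolding smooth_on_set_def
proof (intro ballI allI impI conjI)
  fix c :: 'b and bs :: "R4 list" and b x
  assume "c \<in> Basis" "set bs \<subseteq> Basis"
  then have "smooth_fun (iter_dderiv bs (\<lambda>x. \<phi> x \<bullet> c))"
    using assms smooth_fun_iter_dderiv by blast
  then show "continuous_on A0 (iter_dderiv bs (\<lambda>x. \<phi> x \<bullet> c))"
    by (rule smooth_fun_continuous_on)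
  show "(\<lambda>h. iter_dderiv bs (\<lambda>x. \<phi> x \<bullet> c) (x + h *\<^sub>R b)) differentiable (at 0)"
    if "b \<in> Basis" "x \<in> A0"
    using smooth_fun_has_dir_deriv[OF \<open>smooth_fun _\<close> that] real_differentiable_def by blast
qed

lemma smooth_fun_has_derivative:
  assumes "smooth_fun f" "x \<in> A0"
  shows "(f has_derivative (\<lambda>a. \<Sum>b\<in>Basis. (a \<bullet> b) * dir_deriv b f x)) (at x)"
  using has_derivative_of_dir_derivs[OF smooth_fun_differentiable[OF assms]
      smooth_fun_has_dir_deriv[OF assms(1) _ assms(2)]] .

lemma smooth_fun_dir_deriv_commute:
  assumes "smooth_fun f" "x \<in> A0" "b \<in> Basis" "c \<in> Basis"
  shows "dir_deriv c (dir_deriv b f) x = dir_deriv b (dir_deriv c f) x"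
proof (rule mixed_dir_derivs_eq[OF open_A0 assms(2)])
  have fb: "smooth_fun (dir_deriv b f)" and fc: "smooth_fun (dir_deriv c f)"
    using assms smooth_fun_dir_deriv by blast+
  show "isCont (dir_deriv c (dir_deriv b f)) x" "isCont (dir_deriv b (dir_deriv c f)) x"
    using smooth_fun_continuous_on[OF smooth_fun_dir_deriv] fb fc assms(2-4) open_A0
    by (meson continuous_on_eq_continuous_at)+
  show "\<And>y. y \<in> A0 \<Longrightarrow> ((\<lambda>h. f (y + h *\<^sub>R b)) has_real_derivative dir_deriv b f y) (at 0)"
    "\<And>y. y \<in> A0 \<Longrightarrow> ((\<lambda>h. f (y + h *\<^sub>R c)) has_real_derivative dir_deriv c f y) (at 0)"
    "\<And>y. y \<in> A0 \<Longrightarrow> ((\<lambda>k. dir_deriv b f (y + k *\<^sub>R c)) has_real_derivative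
        dir_deriv c (dir_deriv b f) y) (at 0)"
    "\<And>y. y \<in> A0 \<Longrightarrow> ((\<lambda>k. dir_deriv c f (y + k *\<^sub>R b)) has_real_derivative
        dir_deriv b (dir_deriv c f) y) (at 0)"
    using smooth_fun_has_dir_deriv assms fb fc by blast+
qed

section \<open>The canonical relation\<close>

definition rho :: "R4 \<Rightarrow> real" where
  "rho x = 2 / c0 * norm (\<psi> (uv x) - \<gamma> (fst x))"

lemma range_vector_nonzero:
  assumes "x \<in> A0"
  shows "\<psi> (uv x) - \<gamma> (fst x) \<noteq> 0"
proof -
  obtain \<delta> where "\<delta> > 0" "\<delta> \<le> dist (\<psi> (uv x)) (\<gamma> (fst x))"
    using dist_pos assms by (auto simp: A0_def)
  then show ?thesis
    by (auto simp: dist_norm)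
qed

lemma smooth_fun_rho: "smooth_fun rho"
proof -
  define R where "R x = \<psi> (uv x) - \<gamma> (fst x)" for x
  have "smooth_fun (\<lambda>x. R x \<bullet> e)" if "e \<in> Basis" for e
    using smooth_fun_diff[OF smooth_fun.psi[of "[]" e] smooth_fun.gamma[of "[]" e]] that
    by (simp add: R_def inner_diff_left)
  then have "smooth_fun (\<lambda>x. \<Sum>e\<in>Basis. (R x \<bullet> e) * (R x \<bullet> e))"
    using smooth_fun_sum[of Basis "\<lambda>e x. (R x \<bullet> e) * (R x \<bullet> e)"] smooth_fun.mult by simp
  moreover have "(\<Sum>e\<in>Basis. (R x \<bullet> e) * (R x \<bullet> e)) = R x \<bullet> R x" for x
    by (simp add: euclidean_inner[of "R x" "R x"])
  ultimately have "smooth_fun (\<lambda>x. R x \<bullet> R x)"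
    by simp
  moreover have "\<forall>x\<in>A0. R x \<bullet> R x > 0"
    using range_vector_nonzero by (simp add: R_def)
  ultimately have "smooth_fun (\<lambda>x. 2 / c0 * sqrt (R x \<bullet> R x))"
    by (rule smooth_fun.mult[OF smooth_fun.const smooth_fun.sqrt])
  moreover have "rho = (\<lambda>x. 2 / c0 * sqrt (R x \<bullet> R x))"
    by (simp add: fun_eq_iff rho_def R_def norm_eq_sqrt_inner)
  ultimately show ?thesis
    by simp
qed

lemma gamma_has_vector_derivative:
  assumes "s \<in> {s1<..<s2}"
  shows "(\<gamma> has_vector_derivative gdot \<gamma> s) (at s)"
proof -
  have "(\<lambda>t. \<gamma> t \<bullet> i) differentiable (at s)" if "i \<in> Basis" for i
  proof -
    have "((\<lambda>h. \<gamma> (s + h) \<bullet> i) has_real_derivative iter_dderiv [1] (\<lambda>y. \<gamma> y \<bullet> i) s) (at 0)"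
      using smooth_on_set_has_partial[OF gamma_smooth _ that _ assms, of "[]" 1] by simp
    then have "((\<lambda>t. \<gamma> t \<bullet> i) has_real_derivative iter_dderiv [1] (\<lambda>y. \<gamma> y \<bullet> i) s) (at s)"
      using DERIV_shift[of "\<lambda>t. \<gamma> t \<bullet> i" _ 0 s] by (simp add: add.commute)
    then show ?thesis
      using real_differentiable_def by blast
  qed
  then have "\<gamma> differentiable (at s)"
    using differentiable_componentwise_within[of \<gamma> s UNIV] by blast
  then show ?thesis
    unfolding gdot_def using vector_derivative_works by blast
qed

lemma psi_has_vector_derivative:
  assumes "(u, v) \<in> D"
  shows "((\<lambda>h. \<psi> (u + h, v)) has_vector_derivative psi_u \<psi> u v) (at 0)"
    and "((\<lambda>h. \<psi> (u, v + h)) has_vector_derivative psi_v \<psi> u v) (at 0)"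
proof -
  have "\<psi> differentiable (at (u, v))"
    using psi_imm assms differentiableI by blast
  moreover have "(\<lambda>h. (u + h, v)) differentiable (at 0)" "(\<lambda>h. (u, v + h)) differentiable (at 0)"
    by (simp_all add: differentiable_Pair)
  ultimately have "(\<lambda>h. \<psi> (u + h, v)) differentiable (at 0)" "(\<lambda>h. \<psi> (u, v + h)) differentiable (at 0)"
    using differentiable_compose[of \<psi> "\<lambda>h. (u + h, v)" 0]
      differentiable_compose[of \<psi> "\<lambda>h. (u, v + h)" 0] by simp_all
  then show "((\<lambda>h. \<psi> (u + h, v)) has_vector_derivative psi_u \<psi> u v) (at 0)"
    and "((\<lambda>h. \<psi> (u, v + h)) has_vector_derivative psi_v \<psi> u v) (at 0)"
    unfolding psi_u_def psi_v_def using vector_derivative_works by blast+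
qed

lemma rho_has_dir_deriv:
  assumes x: "(s, u, v, \<tau>) \<in> A0"
    and R': "((\<lambda>h. \<psi> (uv ((s, u, v, \<tau>) + h *\<^sub>R b)) - \<gamma> (fst ((s, u, v, \<tau>) + h *\<^sub>R b)))
      has_vector_derivative R') (at 0)"
  shows "((\<lambda>h. rho ((s, u, v, \<tau>) + h *\<^sub>R b)) has_real_derivative
    2 / c0 * (Rhat \<psi> \<gamma> u v s \<bullet> R')) (at 0)"
proof -
  have "\<psi> (u, v) - \<gamma> s \<noteq> 0"
    using range_vector_nonzero[OF x] by (simp add: uv_def)
  moreover have "sgn (\<psi> (u, v) - \<gamma> s) = Rhat \<psi> \<gamma> u v s"
    using sgn_Rv by (simp add: Rv_def)
  ultimately have "((\<lambda>h. norm (\<psi> (uv ((s, u, v, \<tau>) + h *\<^sub>R b)) - \<gamma> (fst ((s, u, v, \<tau>) + h *\<^sub>R b))))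
      has_real_derivative R' \<bullet> Rhat \<psi> \<gamma> u v s) (at 0)"
    using has_real_derivative_norm[OF R'] by (simp add: uv_def)
  from DERIV_cmult[OF this, of "2 / c0"] show ?thesis
    by (simp add: rho_def inner_commute)
qed

lemma dir_deriv_rho:
  assumes x: "(s, u, v, \<tau>) \<in> A0"
  shows "dir_deriv e_s rho (s, u, v, \<tau>) = - (2 / c0) * (Rhat \<psi> \<gamma> u v s \<bullet> gdot \<gamma> s)"
    and "dir_deriv e_u rho (s, u, v, \<tau>) = 2 / c0 * fst (piT \<psi> \<gamma> u v s)"
    and "dir_deriv e_v rho (s, u, v, \<tau>) = 2 / c0 * snd (piT \<psi> \<gamma> u v s)"
proof -
  have s: "s \<in> {s1<..<s2}" and uv: "(u, v) \<in> D"
    using x by (auto simp: A0_def uv_def)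
  have "((\<lambda>h. \<gamma> (s + h)) has_vector_derivative gdot \<gamma> s) (at 0)"
  proof -
    have "((\<lambda>h. s + h) has_vector_derivative 1) (at 0)"
      by (auto simp: has_vector_derivative_def intro!: derivative_eq_intros)
    from vector_diff_chain_at[OF this, of \<gamma>] show ?thesis
      using gamma_has_vector_derivative[OF s] by (simp add: o_def)
  qed
  then have "((\<lambda>h. \<psi> (u, v) - \<gamma> (s + h)) has_vector_derivative - gdot \<gamma> s) (at 0)"
    using has_vector_derivative_diff[OF has_vector_derivative_const] by fastforce
  then have "((\<lambda>h. rho ((s, u, v, \<tau>) + h *\<^sub>R e_s)) has_real_derivative
      2 / c0 * (Rhat \<psi> \<gamma> u v s \<bullet> - gdot \<gamma> s)) (at 0)"
    by (intro rho_has_dir_deriv[OF x]) (simp add: uv_def)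
  then show "dir_deriv e_s rho (s, u, v, \<tau>) = - (2 / c0) * (Rhat \<psi> \<gamma> u v s \<bullet> gdot \<gamma> s)"
    unfolding dir_deriv_def by (simp add: DERIV_imp_deriv)
  have "((\<lambda>h. \<psi> (u + h, v) - \<gamma> s) has_vector_derivative psi_u \<psi> u v) (at 0)"
    using has_vector_derivative_diff[OF psi_has_vector_derivative(1)[OF uv] has_vector_derivative_const]
    by simp
  then have "((\<lambda>h. rho ((s, u, v, \<tau>) + h *\<^sub>R e_u)) has_real_derivative
      2 / c0 * (Rhat \<psi> \<gamma> u v s \<bullet> psi_u \<psi> u v)) (at 0)"
    by (intro rho_has_dir_deriv[OF x]) (simp add: uv_def)
  then show "dir_deriv e_u rho (s, u, v, \<tau>) = 2 / c0 * fst (piT \<psi> \<gamma> u v s)"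
    unfolding dir_deriv_def piT_eq by (simp add: DERIV_imp_deriv)
  have "((\<lambda>h. \<psi> (u, v + h) - \<gamma> s) has_vector_derivative psi_v \<psi> u v) (at 0)"
    using has_vector_derivative_diff[OF psi_has_vector_derivative(2)[OF uv] has_vector_derivative_const]
    by simp
  then have "((\<lambda>h. rho ((s, u, v, \<tau>) + h *\<^sub>R e_v)) has_real_derivative
      2 / c0 * (Rhat \<psi> \<gamma> u v s \<bullet> psi_v \<psi> u v)) (at 0)"
    by (intro rho_has_dir_deriv[OF x]) (simp add: uv_def)
  then show "dir_deriv e_v rho (s, u, v, \<tau>) = 2 / c0 * snd (piT \<psi> \<gamma> u v s)"
    unfolding dir_deriv_def piT_eq by (simp add: DERIV_imp_deriv)
qed

abbreviation "rho_s \<equiv> dir_deriv e_s rho"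
abbreviation "rho_u \<equiv> dir_deriv e_u rho"
abbreviation "rho_v \<equiv> dir_deriv e_v rho"

lemma rho_tau_invariant: "rho (x + h *\<^sub>R e_tau) = rho x"
  by (simp add: rho_def uv_def)

definition phi :: "R4 \<Rightarrow> pt" where
  "phi x = ((fst x, rho x, - (tau x * rho_s x), tau x),
            (fst (snd x), fst (snd (snd x)), tau x * rho_u x, tau x * rho_v x))"

definition proj :: "pt \<Rightarrow> R4" where
  "proj y = (fst (fst y), fst (snd y), fst (snd (snd y)), snd (snd (snd (fst y))))"

definition U :: "R4 set" where
  "U = {x \<in> A0. tau x \<noteq> 0 \<and> rho x \<in> {t1<..<t2}}"

abbreviation CN :: "pt set" where
  "CN \<equiv> cotangent_nonzero (Yset s1 s2 t1 t2) (Xset \<psi> \<gamma> c0 s1 s2 t1 t2 D)"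

definition Crel :: "pt set" where
  "Crel = Lambda' \<psi> \<gamma> c0 s1 s2 t1 t2 D \<inter> CN"

lemma proj_phi: "proj (phi x) = x"
  by (simp add: proj_def phi_def tau_def)

lemma phi_eq:
  assumes "(s, u, v, \<tau>) \<in> A0"
  shows "phi (s, u, v, \<tau>) =
    ((s, 2 / c0 * norm (Rv \<psi> \<gamma> u v s), 2 * \<tau> / c0 * (Rhat \<psi> \<gamma> u v s \<bullet> gdot \<gamma> s), \<tau>),
     (u, v, 2 * \<tau> / c0 * fst (piT \<psi> \<gamma> u v s), 2 * \<tau> / c0 * snd (piT \<psi> \<gamma> u v s)))"
  using dir_deriv_rho[OF assms] by (simp add: phi_def rho_def tau_def uv_def Rv_def)

lemma Crel_iff: "y \<in> Crel \<longleftrightarrow> proj y \<in> U \<and> y = phi (proj y)"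
proof -
  obtain s t \<sigma> \<tau> u v \<xi> \<eta> where y: "y = ((s, t, \<sigma>, \<tau>), (u, v, \<xi>, \<eta>))"
    by (cases y) auto
  have proj_y: "proj y = (s, u, v, \<tau>)"
    by (simp add: y proj_def)
  have A0_iff: "(s, u, v, \<tau>) \<in> A0 \<longleftrightarrow> s \<in> {s1<..<s2} \<and> (u, v) \<in> D"
    by (simp add: A0_def uv_def)
  have rho_eq: "rho (s, u, v, \<tau>) = 2 / c0 * norm (Rv \<psi> \<gamma> u v s)"
    by (simp add: rho_def uv_def Rv_def)
  have "y \<in> Crel \<longleftrightarrow> (s \<in> {s1<..<s2} \<and> t \<in> {t1<..<t2} \<and> (u, v) \<in> D \<and> (\<sigma>, \<tau>, \<xi>, \<eta>) \<noteq> 0) \<and>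
      y = phi (s, u, v, \<tau>)" (is "_ \<longleftrightarrow> ?dom \<and> _")
  proof -
    have "y \<in> Crel \<longleftrightarrow> ?dom \<and> t = 2 / c0 * norm (Rv \<psi> \<gamma> u v s) \<and>
        \<sigma> = 2 * \<tau> / c0 * (Rhat \<psi> \<gamma> u v s \<bullet> gdot \<gamma> s) \<and>
        \<xi> = 2 * \<tau> / c0 * fst (piT \<psi> \<gamma> u v s) \<and> \<eta> = 2 * \<tau> / c0 * snd (piT \<psi> \<gamma> u v s)"
      by (auto simp: Crel_def y Lambda'_def Lambda_def cotangent_nonzero_def Yset_def Xset_def
          Rv_def prod_eq_iff)
    also have "\<dots> \<longleftrightarrow> ?dom \<and> y = phi (s, u, v, \<tau>)"
      using phi_eq A0_iff by (auto simp: y)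
    finally show ?thesis .
  qed
  moreover have "(\<sigma>, \<tau>, \<xi>, \<eta>) \<noteq> 0 \<longleftrightarrow> \<tau> \<noteq> 0" and "t = rho (s, u, v, \<tau>)"
    if "y = phi (s, u, v, \<tau>)"
    using that by (auto simp: y phi_def tau_def zero_prod_def)
  ultimately show ?thesis
    unfolding proj_y U_def by (auto simp: tau_def A0_iff)
qed

lemma smooth_fun_coordinates:
  "smooth_fun fst" "smooth_fun (\<lambda>x. fst (snd x))" "smooth_fun (\<lambda>x. fst (snd (snd x)))" "smooth_fun tau"
  using smooth_fun.inner[of e_s] smooth_fun.inner[of e_u] smooth_fun.inner[of e_v] smooth_fun.inner[of e_tau]
  by (simp_all add: inner_prod_def tau_def[abs_def])

lemma smooth_fun_tau_invariant_has_derivative: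
  assumes "smooth_fun f" "\<And>y h. f (y + h *\<^sub>R e_tau) = f y" "x \<in> A0"
  shows "(f has_derivative dsuv f x) (at x)"
proof -
  have "dir_deriv e_tau f x = 0"
    using dir_deriv_translation_invariant(2)[OF assms(2)] .
  then have "(\<lambda>a. \<Sum>b\<in>Basis. (a \<bullet> b) * dir_deriv b f x) = dsuv f x"
    by (simp add: fun_eq_iff Basis_R4 dsuv_def inner_prod_def)
  then show ?thesis
    using smooth_fun_has_derivative[OF assms(1,3)] by simp
qed

lemma rho_partial_tau_invariant: "dir_deriv b rho (y + h *\<^sub>R e_tau) = dir_deriv b rho y"
  by (rule dir_deriv_translation_invariant(1)[OF rho_tau_invariant])

definition dphi :: "R4 \<Rightarrow> R4 \<Rightarrow> pt" where
  "dphi x a = ((fst a, dsuv rho x a, - (tau x * dsuv rho_s x a + tau a * rho_s x), tau a),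
     (fst (snd a), fst (snd (snd a)), tau x * dsuv rho_u x a + tau a * rho_u x,
      tau x * dsuv rho_v x a + tau a * rho_v x))"

lemma phi_has_derivative:
  assumes x: "x \<in> A0"
  shows "(phi has_derivative dphi x) (at x)"
proof -
  have partial_has_derivative: "(dir_deriv b rho has_derivative dsuv (dir_deriv b rho) x) (at x)"
    if "b \<in> Basis" for b
    by (rule smooth_fun_tau_invariant_has_derivative[OF smooth_fun_dir_deriv[OF smooth_fun_rho that]
          rho_partial_tau_invariant x])
  have d: "(rho has_derivative dsuv rho x) (at x)" "(rho_s has_derivative dsuv rho_s x) (at x)"
    "(rho_u has_derivative dsuv rho_u x) (at x)" "(rho_v has_derivative dsuv rho_v x) (at x)"
    using smooth_fun_tau_invariant_has_derivative[OF smooth_fun_rho rho_tau_invariant x]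
      partial_has_derivative by (simp_all add: Basis_R4)
  have lin: "((\<lambda>x::R4. fst x) has_derivative fst) (at x)" "(tau has_derivative tau) (at x)"
    "((\<lambda>x::R4. fst (snd x)) has_derivative (\<lambda>a. fst (snd a))) (at x)"
    "((\<lambda>x::R4. fst (snd (snd x))) has_derivative (\<lambda>a. fst (snd (snd a)))) (at x)"
    by (auto intro!: bounded_linear_imp_has_derivative bounded_linear_intros bounded_linear_tau)
  show ?thesis
    unfolding phi_def[abs_def] dphi_def[abs_def]
    by (intro has_derivative_Pair has_derivative_minus has_derivative_mult d lin)
qed

lemma inj_dphi: "inj (dphi x)"
  by (rule injI) (simp add: dphi_def tau_def prod_eq_iff)

lemma U_subset_A0: "U \<subseteq> A0"
  by (auto simp: U_def)

lemma phi_image_U: "phi ` U = Crel"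
proof
  show "phi ` U \<subseteq> Crel"
  proof
    fix y assume "y \<in> phi ` U"
    then obtain x where "x \<in> U" "y = phi x"
      by blast
    then show "y \<in> Crel"
      using Crel_iff[of y] proj_phi[of x] by simp
  qed
  show "Crel \<subseteq> phi ` U"
    using Crel_iff by (metis image_eqI subsetI)
qed

lemma continuous_on_phi: "continuous_on A0 phi"
  using phi_has_derivative has_derivative_continuous continuous_at_imp_continuous_on by blast

lemma continuous_on_proj: "continuous_on S proj"
  unfolding proj_def by (intro continuous_intros)

lemma open_U: "open U"
proof -
  have "continuous_on A0 (\<lambda>x. (tau x, rho x))"
    using continuous_on_Pair[OF linear_continuous_on[OF bounded_linear_tau]
        smooth_fun_continuous_on[OF smooth_fun_rho]] .
  then have "open (A0 \<inter> (\<lambda>x. (tau x, rho x)) -` ((- {0}) \<times> {t1<..<t2}))"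
    by (intro continuous_open_preimage open_A0 open_Times) auto
  moreover have "A0 \<inter> (\<lambda>x. (tau x, rho x)) -` ((- {0}) \<times> {t1<..<t2}) = U"
    by (auto simp: U_def)
  ultimately show ?thesis
    by simp
qed

lemma smooth_on_set_phi: "smooth_on_set U phi"
proof (rule smooth_on_set_subset[OF smooth_on_set_of_smooth_fun U_subset_A0])
  fix c :: pt assume "c \<in> Basis"
  then have "c \<in> (\<lambda>u. (u, 0)) ` (Basis :: R4 set) \<union> (\<lambda>v. (0, v)) ` (Basis :: R4 set)"
    by (subst (asm) Basis_prod_def)
  then obtain b :: R4 where "b \<in> Basis" "c = (b, 0) \<or> c = (0, b)"
    by blast
  moreover have "smooth_fun rho_s" "smooth_fun rho_u" "smooth_fun rho_v"
    using smooth_fun_dir_deriv[OF smooth_fun_rho] by (simp_all add: Basis_R4)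
  ultimately show "smooth_fun (\<lambda>x. phi x \<bullet> c)"
    using smooth_fun_coordinates smooth_fun_rho unfolding Basis_R4
    by (elim disjE insertE) (simp_all add: phi_def inner_prod_def smooth_fun_uminus smooth_fun.mult)
qed

lemma submanifold4_Crel: "submanifold4 Crel"
  unfolding submanifold4_def
proof (rule ballI, intro exI[where x = U] exI[where x = "UNIV :: pt set"] exI[where x = phi] conjI)
  show "open U" "open (UNIV :: pt set)" "smooth_on_set U phi" "phi ` U = Crel \<inter> UNIV"
    by (simp_all add: open_U smooth_on_set_phi phi_image_U)
  show "p \<in> UNIV" for p :: pt
    by simp
  show "inj_on phi U"
    by (metis inj_onI proj_phi)
  have "\<forall>y\<in>Crel \<inter> UNIV. inv_into U phi y = proj y"
    using Crel_iff \<open>inj_on phi U\<close> by (metis IntD1 inv_into_f_f)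
  then show "continuous_on (Crel \<inter> UNIV) (inv_into U phi)"
    using continuous_on_proj continuous_on_cong by fastforce
  show "\<forall>x\<in>U. \<exists>L. (phi has_derivative L) (at x) \<and> inj L"
    using phi_has_derivative inj_dphi U_subset_A0 by blast
qed

lemma proj_CN_A0: "y \<in> CN \<Longrightarrow> proj y \<in> A0"
  by (auto simp: cotangent_nonzero_def Yset_def Xset_def proj_def A0_def uv_def)

lemma Crel_eq_fixed_points: "Crel = {y \<in> CN. y = phi (proj y)}"
proof
  show "Crel \<subseteq> {y \<in> CN. y = phi (proj y)}"
  proof
    fix y assume "y \<in> Crel"
    then have "y \<in> CN" "y = phi (proj y)"
      using Crel_iff[of y] by (simp_all add: Crel_def)
    then show "y \<in> {y \<in> CN. y = phi (proj y)}"
      by simp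
  qed
  show "{y \<in> CN. y = phi (proj y)} \<subseteq> Crel"
  proof safe
    fix y assume y: "y \<in> CN" "y = phi (proj y)"
    obtain s t \<sigma> \<tau> u v \<xi> \<eta> where y_eq: "y = ((s, t, \<sigma>, \<tau>), (u, v, \<xi>, \<eta>))"
      by (cases y) auto
    have "t \<in> {t1<..<t2}" "(\<sigma>, \<tau>, \<xi>, \<eta>) \<noteq> 0"
      using y(1) by (auto simp: y_eq cotangent_nonzero_def Yset_def)
    moreover have "t = rho (proj y)" "\<sigma> = - (\<tau> * rho_s (proj y))" "\<xi> = \<tau> * rho_u (proj y)"
      "\<eta> = \<tau> * rho_v (proj y)" "tau (proj y) = \<tau>"
      using y(2) by (simp_all add: y_eq phi_def proj_def tau_def)
    ultimately have "proj y \<in> U"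
      using proj_CN_A0[OF y(1)] by (auto simp: U_def zero_prod_def)
    with y(2) show "y \<in> Crel"
      using Crel_iff by blast
  qed
qed

lemma closedin_Crel: "closedin (top_of_set CN) Crel"
proof -
  have "continuous_on CN (\<lambda>y. y - phi (proj y))"
    using continuous_on_compose2[OF continuous_on_phi continuous_on_proj] proj_CN_A0
    by (intro continuous_intros) blast
  then have "closedin (top_of_set CN) {y \<in> CN. y - phi (proj y) = 0}"
    by (rule continuous_closedin_preimage_constant)
  then show ?thesis
    by (simp add: Crel_eq_fixed_points)
qed

lemma tau_invariant_eq:
  assumes "\<And>y h. f (y + h *\<^sub>R e_tau) = f y"
  shows "f (s, u, v, a) = f (s, u, v, b)"
  using assms[of "(s, u, v, b)" "a - b"] by simp

lemma conic_Crel: "conic Crel"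
  unfolding conic_def
proof (intro ballI allI impI)
  fix p and l :: real
  assume "p \<in> Crel" "l > 0"
  obtain s u v \<tau> where x: "proj p = (s, u, v, \<tau>)"
    by (metis prod.exhaust)
  have U: "(s, u, v, \<tau>) \<in> U" and p: "p = phi (s, u, v, \<tau>)"
    using Crel_iff \<open>p \<in> Crel\<close> x by auto
  have "(s, u, v, l * \<tau>) \<in> U"
    using U \<open>l > 0\<close> tau_invariant_eq[OF rho_tau_invariant, of s u v "l * \<tau>" \<tau>]
    by (auto simp: U_def tau_def A0_def uv_def)
  moreover have "fiber_scale l p = phi (s, u, v, l * \<tau>)"
    using tau_invariant_eq[OF rho_partial_tau_invariant[of e_s], of s u v "l * \<tau>" \<tau>]
      tau_invariant_eq[OF rho_partial_tau_invariant[of e_u], of s u v "l * \<tau>" \<tau>]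
      tau_invariant_eq[OF rho_partial_tau_invariant[of e_v], of s u v "l * \<tau>" \<tau>]
      tau_invariant_eq[OF rho_tau_invariant, of s u v "l * \<tau>" \<tau>]
    by (simp add: p phi_def tau_def)
  ultimately show "fiber_scale l p \<in> Crel"
    using phi_image_U by blast
qed

lemma bounded_linear_proj: "bounded_linear proj"
  unfolding proj_def by (intro bounded_linear_intros)

lemma tangent_vector_in_range_dphi:
  assumes p: "p \<in> Crel" and w: "w \<in> tangent_vectors Crel p"
  shows "w = dphi (proj p) (proj w)"
proof -
  obtain c where c: "\<And>r. c r \<in> Crel" "c 0 = p" "(c has_vector_derivative w) (at 0)"
    using w by (auto simp: tangent_vectors_def)
  have "proj p \<in> A0"
    using Crel_iff p U_subset_A0 by blast
  have c_eq: "c = (\<lambda>r. phi (proj (c r)))"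
    using Crel_iff c(1) by (metis ext)
  have c_deriv: "(c has_derivative (\<lambda>h. h *\<^sub>R w)) (at 0)"
    using c(3) by (simp add: has_vector_derivative_def)
  have "((\<lambda>r. proj (c r)) has_derivative (\<lambda>h. proj (h *\<^sub>R w))) (at 0)"
    by (rule bounded_linear.has_derivative[OF bounded_linear_proj c_deriv])
  moreover have "(phi has_derivative dphi (proj p)) (at (proj (c 0)))"
    using phi_has_derivative[OF \<open>proj p \<in> A0\<close>] c(2) by simp
  ultimately have "((\<lambda>r. phi (proj (c r))) has_derivative (\<lambda>h. dphi (proj p) (proj (h *\<^sub>R w)))) (at 0)"
    by (rule has_derivative_compose)
  then have "(\<lambda>h. h *\<^sub>R w) = (\<lambda>h. dphi (proj p) (proj (h *\<^sub>R w)))"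
    using c_deriv c_eq has_derivative_unique by metis
  then show ?thesis
    by (metis scaleR_one)
qed

lemma range_dphi_tangent_vector:
  assumes p: "p \<in> Crel"
  shows "dphi (proj p) a \<in> tangent_vectors Crel p"
proof -
  define x0 where "x0 = proj p"
  have "x0 \<in> U" and p_eq: "p = phi x0"
    using Crel_iff p by (auto simp: x0_def)
  then have phi': "(phi has_derivative dphi x0) (at x0)"
    using phi_has_derivative U_subset_A0 by blast
  obtain \<epsilon> where "\<epsilon> > 0" "ball x0 \<epsilon> \<subseteq> U"
    using open_U \<open>x0 \<in> U\<close> open_contains_ball by blast
  define \<delta> where "\<delta> = \<epsilon> / (norm a + 1)"
  have "norm a + 1 > 0"
    using norm_ge_zero[of a] by linarith
  then have "\<delta> > 0" "\<delta> * norm a < \<epsilon>"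
    using \<open>\<epsilon> > 0\<close> by (simp_all add: \<delta>_def field_simps)
  \<comment> \<open>a tangent vector needs a curve defined on all of the real line, so the line through
    x0 in direction a is reparametrized by the bounded function g\<close>
  define g where "g r = \<delta> * sin (r / \<delta>)" for r
  have in_U: "x0 + g r *\<^sub>R a \<in> U" for r
  proof -
    have "\<bar>g r\<bar> * norm a \<le> \<delta> * norm a"
      using \<open>\<delta> > 0\<close> by (intro mult_right_mono) (simp_all add: g_def abs_mult)
    then have "dist x0 (x0 + g r *\<^sub>R a) < \<epsilon>"
      using \<open>\<delta> * norm a < \<epsilon>\<close> by (simp add: dist_norm)
    then show ?thesis
      using \<open>ball x0 \<epsilon> \<subseteq> U\<close> by auto
  qed
  have "(g has_real_derivative \<delta> * (cos (0 / \<delta>) * (1 / \<delta>))) (at 0)"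
    unfolding g_def[abs_def] by (intro DERIV_cmult DERIV_chain2[OF DERIV_sin] DERIV_cdivide DERIV_ident)
  then have "(g has_real_derivative 1) (at 0)"
    using \<open>\<delta> > 0\<close> by simp
  then have "((\<lambda>r. x0 + g r *\<^sub>R a) has_derivative (\<lambda>h. h *\<^sub>R a)) (at 0)"
    by (auto simp: has_field_derivative_def intro!: derivative_eq_intros)
  moreover have "(phi has_derivative dphi x0) (at (x0 + g 0 *\<^sub>R a))"
    using phi' by (simp add: g_def)
  ultimately have "((\<lambda>r. phi (x0 + g r *\<^sub>R a)) has_derivative (\<lambda>h. dphi x0 (h *\<^sub>R a))) (at 0)"
    by (rule has_derivative_compose)
  then have "((\<lambda>r. phi (x0 + g r *\<^sub>R a)) has_vector_derivative dphi x0 a) (at 0)"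
    using linear_scale[OF has_derivative_linear[OF phi']] by (simp add: has_vector_derivative_def)
  moreover have "phi (x0 + g r *\<^sub>R a) \<in> Crel" for r
    using in_U phi_image_U by blast
  moreover have "phi (x0 + g 0 *\<^sub>R a) = p"
    by (simp add: g_def p_eq)
  ultimately show ?thesis
    unfolding tangent_vectors_def x0_def[symmetric]
    by (intro CollectI exI[of _ "\<lambda>r. phi (x0 + g r *\<^sub>R a)"]) simp
qed

lemma tangent_vectors_Crel: "p \<in> Crel \<Longrightarrow> tangent_vectors Crel p = range (dphi (proj p))"
  using tangent_vector_in_range_dphi range_dphi_tangent_vector by blast

lemma twisted_form_dphi:
  assumes "x \<in> A0"
  shows "twisted_form (dphi x a) (dphi x b) = 0"
proof -
  have "dir_deriv e_u rho_s x = dir_deriv e_s rho_u x" "dir_deriv e_v rho_s x = dir_deriv e_s rho_v x"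
    "dir_deriv e_v rho_u x = dir_deriv e_u rho_v x"
    using smooth_fun_dir_deriv_commute[OF smooth_fun_rho assms] by (simp_all add: Basis_R4)
  then show ?thesis
    by (cases a, cases b) (simp add: dphi_def dsuv_def tau_def algebra_simps)
qed

lemma deriv_along_line_eq:
  assumes "smooth_fun f" "b \<in> Basis" "x \<in> A0"
    and "\<And>h. x + h *\<^sub>R b \<in> A0 \<Longrightarrow> g h = c * f (x + h *\<^sub>R b)"
  shows "deriv g 0 = c * dir_deriv b f x"
proof -
  have "\<forall>\<^sub>F h in nhds 0. c * f (x + h *\<^sub>R b) = g h"
    using eventually_line_in_open[OF open_A0 assms(3), of b] by eventually_elim (simp add: assms(4))
  then have "((\<lambda>h. c * f (x + h *\<^sub>R b)) has_real_derivative c * dir_deriv b f x) (at 0)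
      \<longleftrightarrow> (g has_real_derivative c * dir_deriv b f x) (at 0)"
    by (rule DERIV_cong_ev[OF refl _ refl])
  then show ?thesis
    using DERIV_cmult[OF smooth_fun_has_dir_deriv[OF assms(1-3)]] DERIV_imp_deriv by blast
qed

lemma grad_uv_eq:
  assumes "(s, u, v, \<tau>) \<in> A0"
  shows "grad_uv (\<lambda>u' v'. Rhat \<psi> \<gamma> u' v' s \<bullet> gdot \<gamma> s) u v
    = (- (c0 / 2)) *\<^sub>R (dir_deriv e_u rho_s (s, u, v, \<tau>), dir_deriv e_v rho_s (s, u, v, \<tau>))"
proof -
  have eq: "Rhat \<psi> \<gamma> u' v' s \<bullet> gdot \<gamma> s = - (c0 / 2) * rho_s (s, u', v', \<tau>)"
    if "(s, u', v', \<tau>) \<in> A0" for u' v'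
    using dir_deriv_rho(1)[OF that] c0 by simp
  have "deriv (\<lambda>h. Rhat \<psi> \<gamma> (u + h) v s \<bullet> gdot \<gamma> s) 0 = - (c0 / 2) * dir_deriv e_u rho_s (s, u, v, \<tau>)"
    "deriv (\<lambda>h. Rhat \<psi> \<gamma> u (v + h) s \<bullet> gdot \<gamma> s) 0 = - (c0 / 2) * dir_deriv e_v rho_s (s, u, v, \<tau>)"
    by (rule deriv_along_line_eq[OF smooth_fun_dir_deriv[OF smooth_fun_rho] _ assms];
        simp add: Basis_R4 eq)+
  then show ?thesis
    by (simp add: grad_uv_def)
qed

lemma ds_piT_eq:
  assumes "(s, u, v, \<tau>) \<in> A0"
  shows "ds_piT \<psi> \<gamma> u v s
    = (c0 / 2) *\<^sub>R (dir_deriv e_s rho_u (s, u, v, \<tau>), dir_deriv e_s rho_v (s, u, v, \<tau>))"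
proof -
  have eq: "fst (piT \<psi> \<gamma> u v s') = c0 / 2 * rho_u (s', u, v, \<tau>)"
    "snd (piT \<psi> \<gamma> u v s') = c0 / 2 * rho_v (s', u, v, \<tau>)"
    if "(s', u, v, \<tau>) \<in> A0" for s'
    using dir_deriv_rho(2,3)[OF that] c0 by simp_all
  have "deriv (\<lambda>h. fst (piT \<psi> \<gamma> u v (s + h))) 0 = c0 / 2 * dir_deriv e_s rho_u (s, u, v, \<tau>)"
    "deriv (\<lambda>h. snd (piT \<psi> \<gamma> u v (s + h))) 0 = c0 / 2 * dir_deriv e_s rho_v (s, u, v, \<tau>)"
    by (rule deriv_along_line_eq[OF smooth_fun_dir_deriv[OF smooth_fun_rho] _ assms];
        simp add: Basis_R4 eq)+
  then show ?thesis
    by (simp add: ds_piT_def)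
qed

lemma surj_fst_dphi:
  assumes "tau x \<noteq> 0" "rho_u x * dir_deriv e_v rho_s x - rho_v x * dir_deriv e_u rho_s x \<noteq> 0"
  shows "surj (\<lambda>a. fst (dphi x a))"
  unfolding surj_def
proof
  fix z :: R4
  obtain z1 z2 z3 z4 where z: "z = (z1, z2, z3, z4)"
    by (cases z) auto
  obtain a2 a3 where
    "rho_u x * a2 + rho_v x * a3 = z2 - z1 * rho_s x"
    "dir_deriv e_u rho_s x * a2 + dir_deriv e_v rho_s x * a3
       = - (z3 + z4 * rho_s x) / tau x - z1 * dir_deriv e_s rho_s x"
    using linear_system2_solvable[OF assms(2)] by blast
  then have "z = fst (dphi x (z1, a2, a3, z4))"
    using assms(1) by (simp add: z dphi_def dsuv_def tau_def field_simps)
  then show "\<exists>a. z = fst (dphi x a)" ..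
qed

lemma surj_snd_dphi:
  assumes "tau x \<noteq> 0" "rho_u x * dir_deriv e_s rho_v x - rho_v x * dir_deriv e_s rho_u x \<noteq> 0"
  shows "surj (\<lambda>a. snd (dphi x a))"
  unfolding surj_def
proof
  fix z :: R4
  obtain z1 z2 z3 z4 where z: "z = (z1, z2, z3, z4)"
    by (cases z) auto
  have "(tau x * dir_deriv e_s rho_u x) * rho_v x - rho_u x * (tau x * dir_deriv e_s rho_v x)
      = - tau x * (rho_u x * dir_deriv e_s rho_v x - rho_v x * dir_deriv e_s rho_u x)"
    by (simp add: algebra_simps)
  then have "(tau x * dir_deriv e_s rho_u x) * rho_v x - rho_u x * (tau x * dir_deriv e_s rho_v x) \<noteq> 0"
    using assms by simp
  then obtain a1 a4 where
    "(tau x * dir_deriv e_s rho_u x) * a1 + rho_u x * a4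
       = z3 - tau x * (z1 * dir_deriv e_u rho_u x + z2 * dir_deriv e_v rho_u x)"
    "(tau x * dir_deriv e_s rho_v x) * a1 + rho_v x * a4
       = z4 - tau x * (z1 * dir_deriv e_u rho_v x + z2 * dir_deriv e_v rho_v x)"
    using linear_system2_solvable by blast
  then have "z = snd (dphi x (a1, z1, z2, a4))"
    unfolding z dphi_def dsuv_def by (simp add: tau_def[of "(a1, z1, z2, a4)"] algebra_simps)
  then show "\<exists>a. z = snd (dphi x a)" ..
qed

lemma locally_graph_type_Crel:
  assumes p: "p \<in> Crel" "p \<notin> Sigma1 \<psi> \<gamma> c0 s1 s2 t1 t2 D" "p \<notin> Sigma2 \<psi> \<gamma> c0 s1 s2 t1 t2 D"
  shows "locally_graph_type Crel p"
proof -
  obtain s t \<sigma> \<tau> u v \<xi> \<eta> where p_eq: "p = ((s, t, \<sigma>, \<tau>), (u, v, \<xi>, \<eta>))"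
    by (cases p) auto
  define x where "x = (s, u, v, \<tau>)"
  have "x \<in> U"
    using Crel_iff p(1) by (simp add: p_eq proj_def x_def)
  then have "x \<in> A0" "tau x \<noteq> 0"
    by (auto simp: U_def)
  have "p \<in> Lambda' \<psi> \<gamma> c0 s1 s2 t1 t2 D"
    using p(1) by (simp add: Crel_def)
  then have np: "\<not> parallel2 (piT \<psi> \<gamma> u v s) (grad_uv (\<lambda>u' v'. Rhat \<psi> \<gamma> u' v' s \<bullet> gdot \<gamma> s) u v)"
    "\<not> parallel2 (piT \<psi> \<gamma> u v s) (ds_piT \<psi> \<gamma> u v s)"
    using p(2,3) by (simp_all add: Sigma1_def Sigma2_def p_eq)
  have piT: "piT \<psi> \<gamma> u v s = (c0 / 2) *\<^sub>R (rho_u x, rho_v x)"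
    using dir_deriv_rho(2,3)[OF \<open>x \<in> A0\<close>[unfolded x_def]] c0 by (simp add: x_def)
  have "c0 / 2 \<noteq> 0" "- (c0 / 2) \<noteq> 0"
    using c0 by simp_all
  moreover from np have
    "\<not> parallel2 ((c0 / 2) *\<^sub>R (rho_u x, rho_v x))
        ((- (c0 / 2)) *\<^sub>R (dir_deriv e_u rho_s x, dir_deriv e_v rho_s x))"
    "\<not> parallel2 ((c0 / 2) *\<^sub>R (rho_u x, rho_v x))
        ((c0 / 2) *\<^sub>R (dir_deriv e_s rho_u x, dir_deriv e_s rho_v x))"
    unfolding piT grad_uv_eq[OF \<open>x \<in> A0\<close>[unfolded x_def]] ds_piT_eq[OF \<open>x \<in> A0\<close>[unfolded x_def]] x_def .
  ultimately have "\<not> parallel2 (rho_u x, rho_v x) (dir_deriv e_u rho_s x, dir_deriv e_v rho_s x)"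
    "\<not> parallel2 (rho_u x, rho_v x) (dir_deriv e_s rho_u x, dir_deriv e_s rho_v x)"
    using parallel2_scaleR by blast+
  then have "surj (\<lambda>a. fst (dphi x a))" "surj (\<lambda>a. snd (dphi x a))"
    using surj_fst_dphi surj_snd_dphi \<open>tau x \<noteq> 0\<close> by (simp_all add: parallel2_iff_det)
  moreover have "tangent_vectors Crel p = range (dphi x)"
    using tangent_vectors_Crel[OF p(1)] by (simp add: p_eq proj_def x_def)
  ultimately show ?thesis
    unfolding locally_graph_type_def by (simp add: image_image dim_UNIV)
qed

lemma lagrangian_Crel:
  assumes "p \<in> Crel" "w1 \<in> tangent_vectors Crel p" "w2 \<in> tangent_vectors Crel p"
  shows "twisted_form w1 w2 = 0"
proof -
  have "proj p \<in> A0"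
    using Crel_iff assms(1) U_subset_A0 by blast
  moreover obtain a b where "w1 = dphi (proj p) a" "w2 = dphi (proj p) b"
    using assms tangent_vectors_Crel by blast
  ultimately show ?thesis
    using twisted_form_dphi by simp
qed

theorem homogeneous_canonical_relation_Crel:
  "homogeneous_canonical_relation (Yset s1 s2 t1 t2) (Xset \<psi> \<gamma> c0 s1 s2 t1 t2 D) Crel"
  unfolding homogeneous_canonical_relation_def
  using closedin_Crel conic_Crel submanifold4_Crel lagrangian_Crel by (auto simp: Crel_def)

end

theorem proposition2:
  fixes \<psi> :: "real \<times> real \<Rightarrow> real^3" and \<gamma> :: "real \<Rightarrow> real^3"
    and D :: "(real \<times> real) set" and c0 s1 s2 t1 t2 :: real
  assumes c0: "c0 > 0"
    and D_open: "open D"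
    and psi_smooth: "smooth_on_set D \<psi>"
    and psi_inj: "inj_on \<psi> D"
    and psi_homeo: "continuous_on (\<psi> ` D) (inv_into D \<psi>)"
    and psi_imm: "\<forall>x\<in>D. \<exists>L. (\<psi> has_derivative L) (at x) \<and> inj L"
    and gamma_smooth: "smooth_on_set {s1<..<s2} \<gamma>"
    and gamma_inj: "inj_on \<gamma> {s1<..<s2}"
    and gamma_homeo: "continuous_on (\<gamma> ` {s1<..<s2}) (inv_into {s1<..<s2} \<gamma>)"
    and gamma_unit: "\<forall>s\<in>{s1<..<s2}. norm (vector_derivative \<gamma> (at s)) = 1"
    and dist_pos: "\<exists>\<delta>>0. \<forall>x\<in>D. \<forall>s\<in>{s1<..<s2}. \<delta> \<le> dist (\<psi> x) (\<gamma> s)"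
  shows "homogeneous_canonical_relation (Yset s1 s2 t1 t2) (Xset \<psi> \<gamma> c0 s1 s2 t1 t2 D)
           (Lambda' \<psi> \<gamma> c0 s1 s2 t1 t2 D \<inter> cotangent_nonzero (Yset s1 s2 t1 t2) (Xset \<psi> \<gamma> c0 s1 s2 t1 t2 D))
      \<and> (\<forall>p \<in> (Lambda' \<psi> \<gamma> c0 s1 s2 t1 t2 D \<inter> cotangent_nonzero (Yset s1 s2 t1 t2) (Xset \<psi> \<gamma> c0 s1 s2 t1 t2 D))
                 - (Sigma1 \<psi> \<gamma> c0 s1 s2 t1 t2 D \<union> Sigma2 \<psi> \<gamma> c0 s1 s2 t1 t2 D).
           locally_graph_type (Lambda' \<psi> \<gamma> c0 s1 s2 t1 t2 D \<inter> cotangent_nonzero (Yset s1 s2 t1 t2) (Xset \<psi> \<gamma> c0 s1 s2 t1 t2 D)) p)"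
proof -
  interpret sar_geometry \<psi> \<gamma> D c0 s1 s2 t1 t2
    using c0 D_open psi_smooth psi_imm gamma_smooth dist_pos by unfold_locales
  show ?thesis
    using homogeneous_canonical_relation_Crel locally_graph_type_Crel unfolding Crel_def by blast
qed

end
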